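(* Let $\Theta=\bigcup_{n\in\mathbb N}\mathbb Z^n$, $d,M,\mathfrak d\in\mathbb N$, $T\in(0,\infty)$, $a\in C(\mathbb R,\mathbb R)$, and $\mathfrak J,\mathbf F,\mathbf G\in\mathbf N$ with $\mathcal D(\mathfrak J)=(1,\mathfrak d,1)$, $\mathcal R_a(\mathfrak J)=\mathrm{id}_{\mathbb R}$, $\mathcal R_a(\mathbf F)\in C(\mathbb R,\mathbb R)$, $\mathcal R_a(\mathbf G)\in C(\mathbb R^d,\mathbb R)$. For every $\theta\in\Theta$ let $\mathcal U^\theta\colon[0,T]\to[0,T]$ and $W^\theta\colon[-T,T]\to\mathbb R^d$ be functions (write $\mathcal U^\theta_t=\mathcal U^\theta(t)$, $W^\theta_s=W^\theta(s)$; for $\theta\in\Theta$ and integers $i,k$, $(\theta,i,k)\in\Theta$ denotes the concatenated tuple). For $\theta\in\Theta$, $n\in\mathbb N_0$ let $U^\theta_n\colon[0,T]\times\mathbb R^d\to\mathbb R$ satisfy for all $t\in[0,T]$, $x\in\mathbb R^d$ $$U^\theta_n(t,x)=\frac{\mathbb 1_{\mathbb N}(n)}{M^n}\sum_{k=1}^{M^n}(\mathcal R_a(\mathbf G))\bigl(x+W^{(\theta,0,-k)}_{T-t}\bigr)+\sum_{i=0}^{n-1}\frac{T-t}{M^{n-i}}\sum_{k=1}^{M^{n-i}}\Bigl[(\mathcal R_a(\mathbf F)\circ U^{(\theta,i,k)}_i)-\mathbb 1_{\mathbb N}(i)(\mathcal R_a(\mathbf F)\circ U^{(\theta,-i,k)}_{\max\{i-1,0\}})\Bigr]\bigl(\mathcal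 U^{(\theta,i,k)}_t,x+W^{(\theta,i,k)}_{\mathcal U^{(\theta,i,k)}_t-t}\bigr),$$ and let $\mathbf U^\theta_{n,t}\in\mathbf N$, $n\in\mathbb N_0$, $t\in[0,T]$, $\theta\in\Theta$, satisfy $\mathbf U^\theta_{0,t}=((0\ 0\ \cdots\ 0),0)\in\mathbb R^{1\times d}\times\mathbb R^1$ and, for $n\in\mathbb N$, $$\mathbf U^\theta_{n,t}=\Bigl[\bigoplus_{k=1}^{M^n}\bigl(\tfrac1{M^n}\circledast(\mathbf G\bullet\mathbf A_{\operatorname I_d,W^{(\theta,0,-k)}_{T-t}})\bigr)\Bigr]\boxplus_{\mathfrak J}\Bigl[\mathop{\boxplus}_{i=0,\mathfrak J}^{n-1}\Bigl(\tfrac{T-t}{M^{n-i}}\circledast\Bigl(\mathop{\boxplus}_{k=1,\mathfrak J}^{M^{n-i}}\bigl((\mathbf F\bullet\mathbf U^{(\theta,i,k)}_{i,\mathcal U^{(\theta,i,k)}_t})\bullet\mathbf A_{\operatorname I_d,W^{(\theta,i,k)}_{\mathcal U^{(\theta,i,k)}_t-t}}\bigr)\Bigr)\Bigr)\Bigr]\boxplus_{\mathfrak J}\Bigl[\mathop{\boxplus}_{i=0,\mathfrak J}^{n-1}\Bigl(\tfrac{(t-T)\mathbb 1_{\mathbb N}(i)}{M^{n-i}}\circledast\Bigl(\mathop{\boxplus}_{k=1,\mathfrak J}^{M^{n-i}}\bigl((\mathbf F\bullet\mathbf U^{(\theta,-i,k)}_{\max\{i-1,0\},\mathcal U^{(\theta,i,k)}_t})\bullet\mathbf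 A_{\operatorname I_d,W^{(\theta,i,k)}_{\mathcal U^{(\theta,i,k)}_t-t}}\bigr)\Bigr)\Bigr)\Bigr].$$ Then for all $\theta,\theta_1,\theta_2\in\Theta$, $n\in\mathbb N_0$, $t,t_1,t_2\in[0,T]$, $x\in\mathbb R^d$: (i) $\mathcal D(\mathbf U^{\theta_1}_{n,t_1})=\mathcal D(\mathbf U^{\theta_2}_{n,t_2})$; (ii) $\mathcal R_a(\mathbf U^\theta_{n,t})\in C(\mathbb R^d,\mathbb R)$; (iii) $\mathcal L(\mathbf U^\theta_{n,t})\le\max\{\mathfrak d,\mathcal L(\mathbf G)\}+n\mathcal H(\mathbf F)$; (iv) $|||\mathcal D(\mathbf U^\theta_{n,t})|||\le\max\{\mathfrak d,|||\mathcal D(\mathbf F)|||,|||\mathcal D(\mathbf G)|||\}(3M)^n$; (v) $U^\theta_n(t,x)=(\mathcal R_a(\mathbf U^\theta_{n,t}))(x)$; (vi) $\mathcal P(\mathbf U^\theta_{n,t})\le2(\max\{\mathfrak d,\mathcal L(\mathbf G)\}+n\mathcal H(\mathbf F))\bigl(\max\{\mathfrak d,|||\mathcal D(\mathbf F)|||,|||\mathcal D(\mathbf G)|||\}\bigr)^2(3M)^{2n}$.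
   Context: Artificial neural networks (ANNs). Let $\mathbb N=\{1,2,\dots\}$, $\mathbb N_0=\mathbb N\cup\{0\}$, and $\mathbf N=\bigcup_{L\in\mathbb N}\bigcup_{l_0,\dots,l_L\in\mathbb N}\prod_{k=1}^L(\mathbb R^{l_k\times l_{k-1}}\times\mathbb R^{l_k})$. For $\Phi=((W_1,B_1),\dots,(W_L,B_L))\in\prod_{k=1}^L(\mathbb R^{l_k\times l_{k-1}}\times\mathbb R^{l_k})$ set $\mathcal P(\Phi)=\sum_{k=1}^Ll_k(l_{k-1}+1)$, $\mathcal L(\Phi)=L$, $\mathcal I(\Phi)=l_0$, $\mathcal O(\Phi)=l_L$, $\mathcal H(\Phi)=L-1$, $\mathcal D(\Phi)=(l_0,\dots,l_L)$, and for $n\in\mathbb N_0$ let $\mathbb D_n(\Phi)=l_n$ if $n\le L$ and $0$ otherwise. For $x\in\mathbb R^m$, $|||x|||=\max_i|x_i|$. For $a\in C(\mathbb R,\mathbb R)$ the realization $\mathcal R_a(\Phi)\in C(\mathbb R^{l_0},\mathbb R^{l_L})$ is $(\mathcal R_a(\Phi))(x_0)=W_Lx_{L-1}+B_L$ with $x_k=\mathfrak M_{a,l_k}(W_kx_{k-1}+B_k)$, $k=1,\dots,L-1$, where $\mathfrak M_{a,m}(y_1,\dots,y_m)=(a(y_1),\dots,a(y_m))$. Operations on ANNs. $\operatorname I_n$ is the $n\times n$ identity matrix. For $W\in\mathbb R^{m\times n}$, $B\in\mathbb R^m$ let $\mathbf A_{W,B}=((W,B))\in\mathbf N$ (one layer;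 for reals $w,b$, $\mathbf A_{w,b}$ has $1\times1$ weight $w$ and bias $b$). Composition: for $\Phi_1=((W_1,B_1),\dots,(W_L,B_L))$ and $\Phi_2=((\mathscr W_1,\mathscr B_1),\dots,(\mathscr W_{\mathfrak L},\mathscr B_{\mathfrak L}))$ with $\mathcal I(\Phi_1)=\mathcal O(\Phi_2)$, $\Phi_1\bullet\Phi_2=((\mathscr W_1,\mathscr B_1),\dots,(\mathscr W_{\mathfrak L-1},\mathscr B_{\mathfrak L-1}),(W_1\mathscr W_{\mathfrak L},W_1\mathscr B_{\mathfrak L}+B_1),(W_2,B_2),\dots,(W_L,B_L))$ (an ANN of length $L+\mathfrak L-1$). Scalar multiplication: $\lambda\circledast\Phi=\mathbf A_{\lambda\operatorname I_{\mathcal O(\Phi)},0}\bullet\Phi$. Parallelization: for $\Phi_j=((W_{j,1},B_{j,1}),\dots,(W_{j,L},B_{j,L}))$, $j=1,\dots,n$, of equal length $L$, $\mathbf P_n(\Phi_1,\dots,\Phi_n)$ is the ANN whose $k$-th layer is $(\operatorname{diag}(W_{1,k},\dots,W_{n,k}),(B_{1,k},\dots,B_{n,k}))$ (block-diagonal weight matrix, stacked bias). $\mathfrak S_{m,n}=\mathbf A_{(\operatorname I_m\,\cdots\,\operatorname I_m),0}\in\mathbb R^{m\times nm}\times\mathbb R^m$ and $\mathfrak T_{m,n}=\mathbf A_{(\operatorname I_m\,\cdots\,\operatorname I_m)^{\top},0}$ ($n$ identity blocks). Sum of ANNs of equal length: if $\Phi_u,\dots,\Phi_v$ all have the same $\mathcal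 L,\mathcal I,\mathcal O$, then $\bigoplus_{k=u}^v\Phi_k=\mathfrak S_{\mathcal O(\Phi_u),v-u+1}\bullet\bigl([\mathbf P_{v-u+1}(\Phi_u,\dots,\Phi_v)]\bullet\mathfrak T_{\mathcal I(\Phi_u),v-u+1}\bigr)$. Powers: for $\mathcal I(\Psi)=\mathcal O(\Psi)$, $\Psi^{\bullet0}=((\operatorname I_{\mathcal O(\Psi)},0))$ and $\Psi^{\bullet n}=\Psi\bullet\Psi^{\bullet(n-1)}$. Extension: for $\mathcal L(\Phi)\le L$ and $\mathcal O(\Phi)=\mathcal I(\Psi)=\mathcal O(\Psi)$, $\mathcal E_{L,\Psi}(\Phi)=\Psi^{\bullet(L-\mathcal L(\Phi))}\bullet\Phi$. Sum of ANNs of different lengths: if $\mathcal I(\Phi_k)=\mathcal I(\Phi_u)$, $\mathcal O(\Phi_k)=\mathcal I(\Psi)=\mathcal O(\Psi)$ for all $k$ and $\mathcal H(\Psi)=1$, then $\mathop{\boxplus}_{k=u,\Psi}^v\Phi_k=\bigoplus_{k=u}^v\mathcal E_{\max_{j\in\{u,\dots,v\}}\mathcal L(\Phi_j),\Psi}(\Phi_k)$, also written $\Phi_u\boxplus_\Psi\Phi_{u+1}\boxplus_\Psi\cdots\boxplus_\Psi\Phi_v$. *)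

theory Defs
  imports Complex_Main "Jordan_Normal_Form.Matrix"
begin

text \<open>An ANN is a list of layers (W_k, B_k), first layer first; W_k is an l_k x l_(k-1) matrix
  and B_k a vector of dimension l_k.  Membership in the set of all ANNs is the predicate is_ANN.\<close>

type_synonym ann = "(real mat \<times> real vec) list"

definition is_ANN :: "ann \<Rightarrow> bool" where
  "is_ANN \<Phi> \<longleftrightarrow> \<Phi> \<noteq> [] \<and>
     (\<forall>k < length \<Phi>. dim_row (fst (\<Phi> ! k)) = dim_vec (snd (\<Phi> ! k))
        \<and> 0 < dim_row (fst (\<Phi> ! k)) \<and> 0 < dim_col (fst (\<Phi> ! k))) \<and>
     (\<forall>k. Suc k < length \<Phi> \<longrightarrow> dim_col (fst (\<Phi> ! Suc k)) = dim_row (fst (\<Phi> ! k)))"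

definition ann_L :: "ann \<Rightarrow> nat" where "ann_L \<Phi> = length \<Phi>"
definition ann_H :: "ann \<Rightarrow> nat" where "ann_H \<Phi> = length \<Phi> - 1"
definition ann_I :: "ann \<Rightarrow> nat" where "ann_I \<Phi> = dim_col (fst (hd \<Phi>))"
definition ann_O :: "ann \<Rightarrow> nat" where "ann_O \<Phi> = dim_row (fst (last \<Phi>))"

definition ann_D :: "ann \<Rightarrow> nat list" where
  "ann_D \<Phi> = ann_I \<Phi> # map (\<lambda>l. dim_row (fst l)) \<Phi>"

definition ann_P :: "ann \<Rightarrow> nat" where
  "ann_P \<Phi> = (\<Sum>k<length \<Phi>. dim_row (fst (\<Phi> ! k)) * (dim_col (fst (\<Phi> ! k)) + 1))"

definition maxnorm :: "nat list \<Rightarrow> nat" where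
  "maxnorm xs = Max (set xs)"

fun realize_aux :: "(real \<Rightarrow> real) \<Rightarrow> ann \<Rightarrow> real vec \<Rightarrow> real vec" where
  "realize_aux a [] x = x"
| "realize_aux a [(W, B)] x = W *\<^sub>v x + B"
| "realize_aux a ((W, B) # l # ls) x = realize_aux a (l # ls) (map_vec a (W *\<^sub>v x + B))"

definition realize :: "(real \<Rightarrow> real) \<Rightarrow> ann \<Rightarrow> real vec \<Rightarrow> real vec" where
  "realize a \<Phi> = realize_aux a \<Phi>"

definition in_C :: "nat \<Rightarrow> nat \<Rightarrow> (real vec \<Rightarrow> real vec) \<Rightarrow> bool" where
  "in_C m n f \<longleftrightarrow> (\<forall>x \<in> carrier_vec m. f x \<in> carrier_vec n) \<and>
     (\<forall>x \<in> carrier_vec m. \<forall>\<epsilon>>0. \<exists>\<delta>>0. \<forall>y \<in> carrier_vec m.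
        (\<forall>i<m. \<bar>y $ i - x $ i\<bar> < \<delta>) \<longrightarrow> (\<forall>j<n. \<bar>f y $ j - f x $ j\<bar> < \<epsilon>))"

definition realization_in_C :: "(real \<Rightarrow> real) \<Rightarrow> ann \<Rightarrow> nat \<Rightarrow> nat \<Rightarrow> bool" where
  "realization_in_C a \<Phi> m n \<longleftrightarrow> ann_I \<Phi> = m \<and> ann_O \<Phi> = n \<and> in_C m n (realize a \<Phi>)"

definition ann_A :: "real mat \<Rightarrow> real vec \<Rightarrow> ann" where
  "ann_A W B = [(W, B)]"

text \<open>Composition Phi1 \<bullet> Phi2 (Phi2 is applied first).\<close>
definition ann_comp :: "ann \<Rightarrow> ann \<Rightarrow> ann" where
  "ann_comp \<Phi>1 \<Phi>2 =
     butlast \<Phi>2 @ [(fst (hd \<Phi>1) * fst (last \<Phi>2), fst (hd \<Phi>1) *\<^sub>v snd (last \<Phi>2) + snd (hd \<Phi>1))]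
     @ tl \<Phi>1"

definition ann_scalar :: "real \<Rightarrow> ann \<Rightarrow> ann" where
  "ann_scalar c \<Phi> = ann_comp (ann_A (c \<cdot>\<^sub>m 1\<^sub>m (ann_O \<Phi>)) (0\<^sub>v (ann_O \<Phi>))) \<Phi>"

fun block_diag :: "real mat list \<Rightarrow> real mat" where
  "block_diag [] = 0\<^sub>m 0 0"
| "block_diag (A # As) = four_block_mat A (0\<^sub>m (dim_row A) (dim_col (block_diag As)))
      (0\<^sub>m (dim_row (block_diag As)) (dim_col A)) (block_diag As)"

fun stack_vec :: "real vec list \<Rightarrow> real vec" where
  "stack_vec [] = 0\<^sub>v 0"
| "stack_vec (v # vs) = v @\<^sub>v stack_vec vs"

definition ann_par :: "ann list \<Rightarrow> ann" where
  "ann_par \<Phi>s = map (\<lambda>k. (block_diag (map (\<lambda>\<Phi>. fst (\<Phi> ! k)) \<Phi>s),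
                            stack_vec (map (\<lambda>\<Phi>. snd (\<Phi> ! k)) \<Phi>s)))
                   [0..<length (hd \<Phi>s)]"

text \<open>S_(m,n) = A_((I_m ... I_m), 0) and T_(m,n) = A_((I_m ... I_m)^T, 0), n identity blocks.\<close>
definition id_row_blocks :: "nat \<Rightarrow> nat \<Rightarrow> real mat" where
  "id_row_blocks m n = mat m (n * m) (\<lambda>(i, j). if j mod m = i then 1 else 0)"

definition ann_S :: "nat \<Rightarrow> nat \<Rightarrow> ann" where
  "ann_S m n = ann_A (id_row_blocks m n) (0\<^sub>v m)"

definition ann_T :: "nat \<Rightarrow> nat \<Rightarrow> ann" where
  "ann_T m n = ann_A (transpose_mat (id_row_blocks m n)) (0\<^sub>v (n * m))"

definition ann_sum :: "ann list \<Rightarrow> ann" where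
  "ann_sum \<Phi>s = ann_comp (ann_S (ann_O (hd \<Phi>s)) (length \<Phi>s))
                   (ann_comp (ann_par \<Phi>s) (ann_T (ann_I (hd \<Phi>s)) (length \<Phi>s)))"

fun ann_pow :: "ann \<Rightarrow> nat \<Rightarrow> ann" where
  "ann_pow \<Psi> 0 = [(1\<^sub>m (ann_O \<Psi>), 0\<^sub>v (ann_O \<Psi>))]"
| "ann_pow \<Psi> (Suc n) = ann_comp \<Psi> (ann_pow \<Psi> n)"

definition ann_ext :: "nat \<Rightarrow> ann \<Rightarrow> ann \<Rightarrow> ann" where
  "ann_ext L \<Psi> \<Phi> = ann_comp (ann_pow \<Psi> (L - ann_L \<Phi>)) \<Phi>"

text \<open>Sum of ANNs of different lengths, boxplus_(k=u,Psi)^v Phi_k, on the list [Phi_u, ..., Phi_v];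
  also Phi_u \<boxplus>_Psi ... \<boxplus>_Psi Phi_v.\<close>
definition ann_boxplus :: "ann \<Rightarrow> ann list \<Rightarrow> ann" where
  "ann_boxplus \<Psi> \<Phi>s = ann_sum (map (ann_ext (Max (set (map ann_L \<Phi>s))) \<Psi>) \<Phi>s)"

definition Theta :: "int list set" where
  "Theta = {\<theta>. length \<theta> \<ge> 1}"

definition indN :: "nat \<Rightarrow> real" where
  "indN n = (if 1 \<le> n then 1 else 0)"

end

theory Submission
  imports Defs
begin

(*
  Every operation used to build the networks UU (affine layers, composition, scalar
  multiplication, parallelization, sums, and padding with the identity network J) acts on
  realizations as the corresponding operation on functions, and the dimension vector of its
  result depends only on the dimension vectors of its arguments. Since UU is defined by the
  same recursion as the MLP approximations U, a strong induction on n shows simultaneously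
  that UU realizes U, that its dimensions do not depend on the sample index or the time, and
  that depth and width obey the stated bounds: each level adds the hidden layers of F, and the
  widths of the M^n terms with G and of the 2n groups of terms with F add up to
  c M^n + 2 (sum over i < n of M^(n-i) c (3M)^i) = c (3M)^n. The parameter count then
  follows from P(Phi) <= 2 L(Phi) |||D(Phi)|||^2.
*)

section \<open>Layers, dimensions and realizations\<close>

lemma is_ANN_not_Nil: "is_ANN \<Phi> \<Longrightarrow> \<Phi> \<noteq> []"
  unfolding is_ANN_def by simp

lemma all_Suc_less_Cons_iff: "(\<forall>k. Suc k < length (x # xs) \<longrightarrow> P k) \<longleftrightarrow> (\<forall>k<length xs. P k)"
  by simp

lemma all_less_Cons_iff: "(\<forall>k<length (x # xs). P k) \<longleftrightarrow> P 0 \<and> (\<forall>k<length xs. P (Suc k))"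
  by (simp add: All_less_Suc2)

lemma is_ANN_Cons_iff:
  "is_ANN ((W, B) # \<Phi>) \<longleftrightarrow> dim_row W = dim_vec B \<and> 0 < dim_row W \<and> 0 < dim_col W
     \<and> (\<Phi> \<noteq> [] \<longrightarrow> is_ANN \<Phi> \<and> ann_I \<Phi> = dim_row W)"
proof (cases \<Phi>)
  case (Cons l ls)
  have "(\<forall>k<length \<Phi>. dim_col (fst (\<Phi> ! k)) = dim_row (fst (((W, B) # \<Phi>) ! k)))
      \<longleftrightarrow> ann_I \<Phi> = dim_row W \<and> (\<forall>k. Suc k < length \<Phi> \<longrightarrow> dim_col (fst (\<Phi> ! Suc k)) = dim_row (fst (\<Phi> ! k)))"
    unfolding Cons all_less_Cons_iff all_Suc_less_Cons_iff by (simp add: ann_I_def)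
  then show ?thesis
    unfolding is_ANN_def[of "_ # _"] all_Suc_less_Cons_iff all_less_Cons_iff nth_Cons_Suc nth_Cons_0
    using Cons by (auto simp: is_ANN_def)
qed (simp add: is_ANN_def)

lemma realize_Cons:
  "realize a ((W, B) # \<Phi>) x = (if \<Phi> = [] then W *\<^sub>v x + B else realize a \<Phi> (map_vec a (W *\<^sub>v x + B)))"
  unfolding realize_def by (cases \<Phi>) auto

lemma ann_I_Cons [simp]: "ann_I ((W, B) # \<Phi>) = dim_col W"
  unfolding ann_I_def by simp

lemma ann_O_single [simp]: "ann_O [(W, B)] = dim_row W"
  unfolding ann_O_def by simp

lemma ann_O_Cons [simp]: "\<Phi> \<noteq> [] \<Longrightarrow> ann_O (l # \<Phi>) = ann_O \<Phi>"
  unfolding ann_O_def by simp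

lemma affine_carrier:
  "x \<in> carrier_vec (dim_col W) \<Longrightarrow> dim_vec B = dim_row W \<Longrightarrow> W *\<^sub>v x + B \<in> carrier_vec (dim_row W)"
  by (auto intro: carrier_vecI)

lemma realize_carrier:
  "is_ANN \<Phi> \<Longrightarrow> x \<in> carrier_vec (ann_I \<Phi>) \<Longrightarrow> realize a \<Phi> x \<in> carrier_vec (ann_O \<Phi>)"
proof (induction \<Phi> arbitrary: x)
  case (Cons l \<Phi>)
  obtain W B where l: "l = (W, B)" by fastforce
  have "dim_vec B = dim_row W" using Cons.prems(1) unfolding l is_ANN_Cons_iff by simp
  moreover have "x \<in> carrier_vec (dim_col W)" using Cons.prems(2) unfolding l by (simp add: ann_I_def)
  ultimately have layer: "W *\<^sub>v x + B \<in> carrier_vec (dim_row W)" by (rule affine_carrier[rotated])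
  show ?case
  proof (cases "\<Phi> = []")
    case False
    then have "is_ANN \<Phi>" "ann_I \<Phi> = dim_row W" using Cons.prems(1) unfolding l is_ANN_Cons_iff by auto
    then show ?thesis using Cons.IH layer False unfolding l by (simp add: realize_Cons ann_O_def)
  qed (use layer in \<open>simp add: l realize_Cons ann_O_def\<close>)
qed (simp add: is_ANN_def)

lemma ann_I_pos: "is_ANN \<Phi> \<Longrightarrow> 0 < ann_I \<Phi>"
  unfolding is_ANN_def ann_I_def by (auto simp: hd_conv_nth)

lemma ann_O_pos: "is_ANN \<Phi> \<Longrightarrow> 0 < ann_O \<Phi>"
proof -
  assume "is_ANN \<Phi>"
  moreover have "length \<Phi> - 1 < length \<Phi>" using \<open>is_ANN \<Phi>\<close> is_ANN_not_Nil by simp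
  ultimately have "0 < dim_row (fst (\<Phi> ! (length \<Phi> - 1)))" unfolding is_ANN_def by blast
  then show ?thesis using \<open>is_ANN \<Phi>\<close> is_ANN_not_Nil unfolding ann_O_def by (simp add: last_conv_nth)
qed

lemma hd_ann_D [simp]: "hd (ann_D \<Phi>) = ann_I \<Phi>"
  unfolding ann_D_def by simp

lemma nth_ann_D_0 [simp]: "ann_D \<Phi> ! 0 = ann_I \<Phi>"
  unfolding ann_D_def by simp

lemma last_ann_D [simp]: "\<Phi> \<noteq> [] \<Longrightarrow> last (ann_D \<Phi>) = ann_O \<Phi>"
  unfolding ann_D_def ann_O_def by (simp add: last_map)

lemma length_ann_D [simp]: "length (ann_D \<Phi>) = Suc (length \<Phi>)"
  unfolding ann_D_def by simp

lemma ann_D_not_Nil [simp]: "ann_D \<Phi> \<noteq> []"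
  unfolding ann_D_def by simp

lemma maxnorm_ge: "x \<in> set xs \<Longrightarrow> x \<le> maxnorm xs"
  unfolding maxnorm_def by simp

lemma maxnorm_le_iff: "xs \<noteq> [] \<Longrightarrow> maxnorm xs \<le> b \<longleftrightarrow> (\<forall>x \<in> set xs. x \<le> b)"
  unfolding maxnorm_def by simp

lemma ann_I_le_maxnorm: "ann_I \<Phi> \<le> maxnorm (ann_D \<Phi>)"
  by (rule maxnorm_ge) (simp add: ann_D_def)

lemma ann_O_le_maxnorm: "\<Phi> \<noteq> [] \<Longrightarrow> ann_O \<Phi> \<le> maxnorm (ann_D \<Phi>)"
  by (rule maxnorm_ge) (metis last_ann_D ann_D_not_Nil last_in_set)

lemma one_le_maxnorm_ann_D: "is_ANN \<Phi> \<Longrightarrow> 1 \<le> maxnorm (ann_D \<Phi>)"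
  using ann_I_pos ann_I_le_maxnorm by (metis One_nat_def Suc_leI order_trans)

section \<open>Affine layers, composition and scalar multiplication\<close>

lemma is_ANN_ann_A: "dim_row W = dim_vec B \<Longrightarrow> 0 < dim_row W \<Longrightarrow> 0 < dim_col W \<Longrightarrow> is_ANN (ann_A W B)"
  unfolding ann_A_def by (simp add: is_ANN_Cons_iff)

lemma ann_A_simps [simp]:
  "ann_A W B \<noteq> []" "ann_I (ann_A W B) = dim_col W" "ann_O (ann_A W B) = dim_row W"
  "length (ann_A W B) = 1" "ann_D (ann_A W B) = [dim_col W, dim_row W]"
  "realize a (ann_A W B) x = W *\<^sub>v x + B"
  by (simp_all add: ann_A_def ann_I_def ann_O_def ann_D_def realize_def)

lemma ann_I_ann_comp [simp]: "\<Phi>2 \<noteq> [] \<Longrightarrow> ann_I (ann_comp \<Phi>1 \<Phi>2) = ann_I \<Phi>2"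
proof (cases \<Phi>2 rule: rev_cases)
  case (snoc ys y)
  then show ?thesis unfolding ann_comp_def ann_I_def by (cases ys) auto
qed simp

lemma ann_O_ann_comp [simp]: "\<Phi>1 \<noteq> [] \<Longrightarrow> ann_O (ann_comp \<Phi>1 \<Phi>2) = ann_O \<Phi>1"
  unfolding ann_comp_def ann_O_def by (cases \<Phi>1) (auto simp: last_append)

lemma length_ann_comp [simp]:
  "\<Phi>1 \<noteq> [] \<Longrightarrow> \<Phi>2 \<noteq> [] \<Longrightarrow> length (ann_comp \<Phi>1 \<Phi>2) = length \<Phi>1 + length \<Phi>2 - 1"
  unfolding ann_comp_def by (cases \<Phi>1) auto

lemma ann_comp_not_Nil [simp]: "ann_comp \<Phi>1 \<Phi>2 \<noteq> []"
  unfolding ann_comp_def by simp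

lemma ann_D_ann_comp:
  "\<Phi>1 \<noteq> [] \<Longrightarrow> \<Phi>2 \<noteq> [] \<Longrightarrow> ann_D (ann_comp \<Phi>1 \<Phi>2) = butlast (ann_D \<Phi>2) @ tl (ann_D \<Phi>1)"
proof -
  assume ne: "\<Phi>1 \<noteq> []" "\<Phi>2 \<noteq> []"
  have "ann_D (ann_comp \<Phi>1 \<Phi>2) = ann_I \<Phi>2 # map (\<lambda>l. dim_row (fst l)) (ann_comp \<Phi>1 \<Phi>2)"
    unfolding ann_D_def using ne by simp
  also have "\<dots> = butlast (ann_D \<Phi>2) @ tl (ann_D \<Phi>1)"
    using ne unfolding ann_D_def ann_comp_def by (cases \<Phi>1; cases \<Phi>2 rule: rev_cases) auto
  finally show ?thesis .
qed

lemma ann_comp_single_Cons: "ann_comp ((W1, B1) # \<Phi>1) [(W, B)] = (W1 * W, W1 *\<^sub>v B + B1) # \<Phi>1"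
  unfolding ann_comp_def by simp

lemma ann_comp_Cons: "\<Phi>2 \<noteq> [] \<Longrightarrow> ann_comp \<Phi>1 ((W, B) # \<Phi>2) = (W, B) # ann_comp \<Phi>1 \<Phi>2"
  unfolding ann_comp_def by simp

lemma is_ANN_ann_comp:
  assumes "is_ANN \<Phi>1" "is_ANN \<Phi>2" "ann_I \<Phi>1 = ann_O \<Phi>2"
  shows "is_ANN (ann_comp \<Phi>1 \<Phi>2)"
  using assms(2,3)
proof (induction \<Phi>2)
  case (Cons l \<Phi>2)
  obtain W B where l: "l = (W, B)" by fastforce
  obtain W1 B1 \<Phi>1' where \<Phi>1: "\<Phi>1 = (W1, B1) # \<Phi>1'"
    using is_ANN_not_Nil[OF assms(1)] by (metis list.exhaust prod.exhaust)
  show ?case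
  proof (cases "\<Phi>2 = []")
    case True
    then have "dim_col W1 = dim_row W" using Cons.prems(2) unfolding l \<Phi>1 by (simp add: ann_O_def)
    then show ?thesis using assms(1) Cons.prems(1)
      unfolding l \<Phi>1 True ann_comp_single_Cons is_ANN_Cons_iff by simp
  next
    case False
    then have "is_ANN \<Phi>2" "ann_I \<Phi>2 = dim_row W" "ann_I \<Phi>1 = ann_O \<Phi>2"
      using Cons.prems unfolding l is_ANN_Cons_iff by auto
    then show ?thesis using Cons.IH Cons.prems(1) False
      unfolding l ann_comp_Cons[OF False] is_ANN_Cons_iff by simp
  qed
qed (simp add: is_ANN_def)

lemma realize_ann_comp:
  assumes "is_ANN \<Phi>1" "is_ANN \<Phi>2" "ann_I \<Phi>1 = ann_O \<Phi>2" "x \<in> carrier_vec (ann_I \<Phi>2)"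
  shows "realize a (ann_comp \<Phi>1 \<Phi>2) x = realize a \<Phi>1 (realize a \<Phi>2 x)"
  using assms(2-4)
proof (induction \<Phi>2 arbitrary: x)
  case (Cons l \<Phi>2)
  obtain W B where l: "l = (W, B)" by fastforce
  obtain W1 B1 \<Phi>1' where \<Phi>1: "\<Phi>1 = (W1, B1) # \<Phi>1'"
    using is_ANN_not_Nil[OF assms(1)] by (metis list.exhaust prod.exhaust)
  have x: "x \<in> carrier_vec (dim_col W)" and B: "B \<in> carrier_vec (dim_row W)"
    using Cons.prems(1,3) unfolding l is_ANN_Cons_iff by (auto intro: carrier_vecI)
  have Wx: "W *\<^sub>v x \<in> carrier_vec (dim_row W)" by (rule mult_mat_vec_carrier[OF carrier_mat_triv x])
  show ?case
  proof (cases "\<Phi>2 = []")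
    case True
    have W1: "W1 \<in> carrier_mat (dim_row W1) (dim_row W)"
      using Cons.prems(2) unfolding l \<Phi>1 True by (auto simp: ann_O_def)
    have B1: "B1 \<in> carrier_vec (dim_row W1)"
      using assms(1) unfolding \<Phi>1 is_ANN_Cons_iff by (auto intro: carrier_vecI)
    have "(W1 * W) *\<^sub>v x + (W1 *\<^sub>v B + B1) = W1 *\<^sub>v (W *\<^sub>v x) + (W1 *\<^sub>v B + B1)"
      by (simp only: assoc_mult_mat_vec[OF W1 carrier_mat_triv x])
    also have "\<dots> = (W1 *\<^sub>v (W *\<^sub>v x) + W1 *\<^sub>v B) + B1"
      by (rule assoc_add_vec[symmetric, OF mult_mat_vec_carrier[OF W1 Wx] mult_mat_vec_carrier[OF W1 B] B1])
    also have "\<dots> = W1 *\<^sub>v (W *\<^sub>v x + B) + B1" by (simp only: mult_add_distrib_mat_vec[OF W1 Wx B])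
    finally have "(W1 * W) *\<^sub>v x + (W1 *\<^sub>v B + B1) = W1 *\<^sub>v (W *\<^sub>v x + B) + B1" .
    then show ?thesis unfolding l \<Phi>1 True ann_comp_single_Cons realize_Cons by simp
  next
    case False
    have "is_ANN \<Phi>2" "ann_I \<Phi>1 = ann_O \<Phi>2" "map_vec a (W *\<^sub>v x + B) \<in> carrier_vec (ann_I \<Phi>2)"
      using Cons.prems False Wx B unfolding l is_ANN_Cons_iff by auto
    with Cons.IH show ?thesis unfolding l ann_comp_Cons[OF False] realize_Cons by (simp add: False)
  qed
qed (simp add: is_ANN_def)

lemma ann_comp_shift_simps:
  assumes "\<Phi> \<noteq> []" "ann_I \<Phi> = d"
  shows "ann_I (ann_comp \<Phi> (ann_A (1\<^sub>m d) v)) = d" "ann_O (ann_comp \<Phi> (ann_A (1\<^sub>m d) v)) = ann_O \<Phi>"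
    "length (ann_comp \<Phi> (ann_A (1\<^sub>m d) v)) = length \<Phi>" "ann_D (ann_comp \<Phi> (ann_A (1\<^sub>m d) v)) = ann_D \<Phi>"
proof -
  have "ann_D (ann_comp \<Phi> (ann_A (1\<^sub>m d) v)) = hd (ann_D \<Phi>) # tl (ann_D \<Phi>)"
    using assms by (simp add: ann_D_ann_comp)
  also have "\<dots> = ann_D \<Phi>" by (rule list.collapse[OF ann_D_not_Nil])
  finally show "ann_D (ann_comp \<Phi> (ann_A (1\<^sub>m d) v)) = ann_D \<Phi>" .
qed (use assms in simp_all)

lemma is_ANN_ann_comp_shift:
  "is_ANN \<Phi> \<Longrightarrow> ann_I \<Phi> = d \<Longrightarrow> v \<in> carrier_vec d \<Longrightarrow> is_ANN (ann_comp \<Phi> (ann_A (1\<^sub>m d) v))"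
  using ann_I_pos[of \<Phi>] by (auto intro!: is_ANN_ann_comp is_ANN_ann_A)

lemma realize_ann_comp_shift:
  assumes "is_ANN \<Phi>" "ann_I \<Phi> = d" "v \<in> carrier_vec d" "x \<in> carrier_vec d"
  shows "realize a (ann_comp \<Phi> (ann_A (1\<^sub>m d) v)) x = realize a \<Phi> (x + v)"
  using assms ann_I_pos[OF assms(1)] by (simp add: realize_ann_comp is_ANN_ann_A)

lemma smult_one_mat_mult_vec_index:
  fixes c :: real
  assumes "y \<in> carrier_vec p" "i < p"
  shows "((c \<cdot>\<^sub>m 1\<^sub>m p) *\<^sub>v y) $ i = c * y $ i"
proof -
  have "((c \<cdot>\<^sub>m 1\<^sub>m p) *\<^sub>v y) $ i = (\<Sum>j\<in>{0..<p}. (c \<cdot>\<^sub>m 1\<^sub>m p) $$ (i, j) * y $ j)"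
    using assms by (simp add: scalar_prod_def row_def)
  also have "\<dots> = (\<Sum>j\<in>{0..<p}. if j = i then c * y $ j else 0)"
    by (rule sum.cong) (use assms in auto)
  finally show ?thesis using assms by simp
qed

lemma ann_scalar_simps [simp]:
  assumes "\<Phi> \<noteq> []"
  shows "ann_scalar c \<Phi> \<noteq> []" "ann_I (ann_scalar c \<Phi>) = ann_I \<Phi>" "ann_O (ann_scalar c \<Phi>) = ann_O \<Phi>"
    "length (ann_scalar c \<Phi>) = length \<Phi>" "ann_D (ann_scalar c \<Phi>) = ann_D \<Phi>"
proof -
  have "ann_D (ann_scalar c \<Phi>) = butlast (ann_D \<Phi>) @ [last (ann_D \<Phi>)]"
    using assms unfolding ann_scalar_def by (simp add: ann_D_ann_comp)
  then show "ann_D (ann_scalar c \<Phi>) = ann_D \<Phi>" by simp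
qed (use assms in \<open>simp_all add: ann_scalar_def\<close>)

lemma is_ANN_ann_scalar: "is_ANN \<Phi> \<Longrightarrow> is_ANN (ann_scalar c \<Phi>)"
  unfolding ann_scalar_def by (rule is_ANN_ann_comp) (simp_all add: is_ANN_ann_A ann_O_pos)

lemma realize_ann_scalar:
  assumes "is_ANN \<Phi>" "x \<in> carrier_vec (ann_I \<Phi>)" "i < ann_O \<Phi>"
  shows "realize a (ann_scalar c \<Phi>) x $ i = c * realize a \<Phi> x $ i"
proof -
  have "realize a \<Phi> x \<in> carrier_vec (ann_O \<Phi>)" using assms(1,2) by (rule realize_carrier)
  then show ?thesis unfolding ann_scalar_def
    using assms smult_one_mat_mult_vec_index
    by (simp add: realize_ann_comp is_ANN_ann_A ann_O_pos)
qed

section \<open>Block-diagonal matrices and stacked vectors\<close>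

lemma map_upt_cong: "(\<And>i. i < n \<Longrightarrow> f i = g i) \<Longrightarrow> map f [0..<n] = map g [0..<n]"
  by (induction n) auto

lemma sum_list_map_upt: "sum_list (map f [0..<n]) = (\<Sum>i<n. f i)"
  by (induction n) auto

lemma dim_stack_vec: "dim_vec (stack_vec vs) = sum_list (map dim_vec vs)"
  by (induction vs) auto

lemma dim_block_diag:
  "dim_row (block_diag Ms) = sum_list (map dim_row Ms)"
  "dim_col (block_diag Ms) = sum_list (map dim_col Ms)"
  by (induction Ms) auto

lemma dim_stack_vec_const:
  "(\<And>q. q < n \<Longrightarrow> v q \<in> carrier_vec m) \<Longrightarrow> dim_vec (stack_vec (map v [0..<n])) = n * m"
  by (induction n) (auto simp: dim_stack_vec)

lemma zero_mat_mult_vec: "v \<in> carrier_vec c \<Longrightarrow> 0\<^sub>m r c *\<^sub>v v = 0\<^sub>v r"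
  by (rule eq_vecI) (auto simp: row_def scalar_prod_def)

lemma stack_vec_index:
  assumes "\<And>q. q < n \<Longrightarrow> v q \<in> carrier_vec m" "j < n * m"
  shows "stack_vec (map v [0..<n]) $ j = v (j div m) $ (j mod m)"
  using assms
proof (induction n arbitrary: v j)
  case (Suc n)
  have m: "0 < m" using Suc.prems(2) by (cases m) auto
  have tail: "dim_vec (stack_vec (map (\<lambda>i. v (Suc i)) [0..<n])) = n * m"
    using Suc.prems(1) by (intro dim_stack_vec_const) auto
  have v0: "dim_vec (v 0) = m" using Suc.prems(1) by auto
  show ?case
  proof (cases "j < m")
    case False
    have "stack_vec (map (\<lambda>i. v (Suc i)) [0..<n]) $ (j - m) = v (Suc ((j - m) div m)) $ ((j - m) mod m)"
      using Suc.IH[of "\<lambda>i. v (Suc i)" "j - m"] Suc.prems False by auto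
    moreover have "j div m = Suc ((j - m) div m)" "j mod m = (j - m) mod m"
      using False m by (simp_all add: le_div_geq le_mod_geq)
    ultimately show ?thesis using v0 tail False Suc.prems(2) unfolding map_upt_Suc by simp
  qed (use v0 tail in \<open>simp add: map_upt_Suc del: upt_Suc\<close>)
qed simp

lemma block_diag_mult_stack_vec:
  assumes "\<And>q. q < n \<Longrightarrow> dim_col (M q) = dim_vec (v q)"
  shows "block_diag (map M [0..<n]) *\<^sub>v stack_vec (map v [0..<n]) = stack_vec (map (\<lambda>q. M q *\<^sub>v v q) [0..<n])"
  using assms
proof (induction n arbitrary: M v)
  case (Suc n)
  let ?BD = "block_diag (map (\<lambda>i. M (Suc i)) [0..<n])"
  let ?SV = "stack_vec (map (\<lambda>i. v (Suc i)) [0..<n])"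
  have IH: "?BD *\<^sub>v ?SV = stack_vec (map (\<lambda>q. M (Suc q) *\<^sub>v v (Suc q)) [0..<n])"
    using Suc.IH[of "\<lambda>i. M (Suc i)" "\<lambda>i. v (Suc i)"] Suc.prems by simp
  have BD: "dim_col ?BD = dim_vec ?SV" unfolding dim_block_diag dim_stack_vec map_map o_def
    using Suc.prems by (intro arg_cong[where f=sum_list] map_upt_cong) auto
  have M0: "dim_col (M 0) = dim_vec (v 0)" using Suc.prems by auto
  have "block_diag (map M [0..<Suc n]) *\<^sub>v stack_vec (map v [0..<Suc n])
      = four_block_mat (M 0) (0\<^sub>m (dim_row (M 0)) (dim_col ?BD)) (0\<^sub>m (dim_row ?BD) (dim_col (M 0))) ?BD
         *\<^sub>v (v 0 @\<^sub>v ?SV)" unfolding map_upt_Suc by simp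
  also have "\<dots> = (M 0 *\<^sub>v v 0 + 0\<^sub>m (dim_row (M 0)) (dim_col ?BD) *\<^sub>v ?SV) @\<^sub>v
        (0\<^sub>m (dim_row ?BD) (dim_col (M 0)) *\<^sub>v v 0 + ?BD *\<^sub>v ?SV)"
    by (rule four_block_mat_mult_vec[of _ "dim_row (M 0)" "dim_col (M 0)" _ "dim_col ?BD" _ "dim_row ?BD"])
      (use M0 BD in \<open>auto intro: carrier_vecI\<close>)
  also have "\<dots> = (M 0 *\<^sub>v v 0) @\<^sub>v (?BD *\<^sub>v ?SV)"
  proof -
    have "0\<^sub>m (dim_row (M 0)) (dim_col ?BD) *\<^sub>v ?SV = 0\<^sub>v (dim_row (M 0))"
      "0\<^sub>m (dim_row ?BD) (dim_col (M 0)) *\<^sub>v v 0 = 0\<^sub>v (dim_row ?BD)"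
      using M0 BD by (auto intro: zero_mat_mult_vec carrier_vecI)
    moreover have "M 0 *\<^sub>v v 0 + 0\<^sub>v (dim_row (M 0)) = M 0 *\<^sub>v v 0" "0\<^sub>v (dim_row ?BD) + ?BD *\<^sub>v ?SV = ?BD *\<^sub>v ?SV"
      by (auto intro: right_zero_vec left_zero_vec carrier_vecI)
    ultimately show ?thesis by (simp only:)
  qed
  finally show ?case unfolding map_upt_Suc IH by simp
qed (auto intro!: eq_vecI)

lemma stack_vec_add:
  assumes "\<And>q. q < n \<Longrightarrow> dim_vec (u q) = dim_vec (v q)"
  shows "stack_vec (map u [0..<n]) + stack_vec (map v [0..<n]) = stack_vec (map (\<lambda>q. u q + v q) [0..<n])"
  using assms
proof (induction n arbitrary: u v)
  case (Suc n)
  let ?U = "stack_vec (map (\<lambda>i. u (Suc i)) [0..<n])" and ?V = "stack_vec (map (\<lambda>i. v (Suc i)) [0..<n])"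
  have "dim_vec ?U = dim_vec ?V" unfolding dim_stack_vec map_map o_def using Suc.prems
    by (intro arg_cong[where f=sum_list] map_upt_cong) auto
  then have "stack_vec (map u [0..<Suc n]) + stack_vec (map v [0..<Suc n]) = (u 0 + v 0) @\<^sub>v (?U + ?V)"
    unfolding map_upt_Suc stack_vec.simps
    by (intro append_vec_add[of _ "dim_vec (u 0)" _ _ "dim_vec ?V"]) (use Suc.prems in \<open>auto intro: carrier_vecI\<close>)
  then show ?case using Suc.IH[of "\<lambda>i. u (Suc i)" "\<lambda>i. v (Suc i)"] Suc.prems unfolding map_upt_Suc by simp
qed (auto intro!: eq_vecI)

lemma map_vec_stack_vec: "map_vec f (stack_vec vs) = stack_vec (map (map_vec f) vs)"
proof (induction vs)
  case (Cons v vs)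
  have "map_vec f (v @\<^sub>v w) = map_vec f v @\<^sub>v map_vec f w" for w by (rule eq_vecI) auto
  then show ?case using Cons by simp
qed (auto intro!: eq_vecI)

lemma sum_mod_indicator:
  fixes f :: "nat \<Rightarrow> real"
  assumes "i < m"
  shows "(\<Sum>j<n * m. (if j mod m = i then 1 else 0) * f j) = (\<Sum>q<n. f (q * m + i))"
proof -
  have "(\<Sum>j<n * m. (if j mod m = i then 1 else 0) * f j)
      = (\<Sum>q<n. \<Sum>j\<in>{q * m..<q * m + m}. (if j mod m = i then 1 else 0) * f j)"
    by (rule sum.nat_group[symmetric])
  also have "\<dots> = (\<Sum>q<n. \<Sum>j\<in>{q * m..<q * m + m}. if j = q * m + i then f j else 0)"
  proof (intro sum.cong refl)
    fix q j assume "j \<in> {q * m..<q * m + m}"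
    then obtain r where "j = q * m + r" "r < m" by (metis add_less_cancel_left atLeastLessThan_iff le_Suc_ex)
    then show "(if j mod m = i then 1 else 0) * f j = (if j = q * m + i then f j else 0)" by auto
  qed
  also have "\<dots> = (\<Sum>q<n. f (q * m + i))" using assms by (simp add: sum.delta')
  finally show ?thesis .
qed

lemma id_row_blocks_mult_stack_vec:
  assumes "\<And>q. q < n \<Longrightarrow> v q \<in> carrier_vec m" "i < m"
  shows "(id_row_blocks m n *\<^sub>v stack_vec (map v [0..<n])) $ i = (\<Sum>q<n. v q $ i)"
proof -
  let ?w = "stack_vec (map v [0..<n])"
  have w: "dim_vec ?w = n * m" using assms(1) by (rule dim_stack_vec_const)
  have "(id_row_blocks m n *\<^sub>v ?w) $ i = (\<Sum>j<n * m. (if j mod m = i then 1 else 0) * ?w $ j)"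
    using assms(2) w unfolding id_row_blocks_def by (simp add: scalar_prod_def row_def lessThan_atLeast0)
  also have "\<dots> = (\<Sum>q<n. ?w $ (q * m + i))" by (rule sum_mod_indicator[OF assms(2)])
  also have "\<dots> = (\<Sum>q<n. v q $ i)"
  proof (rule sum.cong[OF refl])
    fix q assume "q \<in> {..<n}"
    then have "Suc q * m \<le> n * m" by (intro mult_le_mono1) simp
    then have "q * m + i < n * m" using assms(2) by simp
    then show "?w $ (q * m + i) = v q $ i" using stack_vec_index[OF assms(1)] assms(2) by simp
  qed
  finally show ?thesis .
qed

lemma transpose_id_row_blocks_mult:
  assumes "x \<in> carrier_vec m"
  shows "transpose_mat (id_row_blocks m n) *\<^sub>v x = stack_vec (map (\<lambda>_. x) [0..<n])"
proof (rule eq_vecI)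
  have stack: "dim_vec (stack_vec (map (\<lambda>_. x) [0..<n])) = n * m" using assms by (intro dim_stack_vec_const)
  then show "dim_vec (transpose_mat (id_row_blocks m n) *\<^sub>v x) = dim_vec (stack_vec (map (\<lambda>_. x) [0..<n]))"
    by (simp add: id_row_blocks_def)
  fix j assume "j < dim_vec (stack_vec (map (\<lambda>_. x) [0..<n]))"
  then have j: "j < n * m" using stack by simp
  then have m: "0 < m" by (cases m) auto
  have "(transpose_mat (id_row_blocks m n) *\<^sub>v x) $ j = (\<Sum>i<m. (if j mod m = i then 1 else 0) * x $ i)"
    using j assms unfolding id_row_blocks_def by (simp add: scalar_prod_def row_def lessThan_atLeast0)
  also have "\<dots> = (\<Sum>i<m. if i = j mod m then x $ i else 0)" by (rule sum.cong) auto
  also have "\<dots> = stack_vec (map (\<lambda>_. x) [0..<n]) $ j"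
    using m stack_vec_index[of n "\<lambda>_. x" m j] assms j by (simp add: sum.delta')
  finally show "(transpose_mat (id_row_blocks m n) *\<^sub>v x) $ j = stack_vec (map (\<lambda>_. x) [0..<n]) $ j" .
qed

section \<open>Parallelization and sums of networks\<close>

lemma ann_par_Cons:
  assumes "\<Phi>s \<noteq> []" "length (hd \<Phi>s) = Suc L" "\<forall>\<Phi>\<in>set \<Phi>s. \<Phi> \<noteq> []"
  shows "ann_par \<Phi>s = (block_diag (map (\<lambda>\<Phi>. fst (\<Phi> ! 0)) \<Phi>s), stack_vec (map (\<lambda>\<Phi>. snd (\<Phi> ! 0)) \<Phi>s))
           # ann_par (map tl \<Phi>s)"
proof -
  have h: "length (hd (map tl \<Phi>s)) = L" using assms by (simp add: hd_map)
  have e: "\<And>k. map (\<lambda>\<Phi>. fst (\<Phi> ! k)) (map tl \<Phi>s) = map (\<lambda>\<Phi>. fst (\<Phi> ! Suc k)) \<Phi>s"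
    "\<And>k. map (\<lambda>\<Phi>. snd (\<Phi> ! k)) (map tl \<Phi>s) = map (\<lambda>\<Phi>. snd (\<Phi> ! Suc k)) \<Phi>s"
    using assms(3) by (auto intro!: map_cong simp: neq_Nil_conv)
  show ?thesis unfolding ann_par_def assms(2) h map_upt_Suc e by simp
qed

lemma map_conv_map_nth: "map f xs = map (\<lambda>i. f (xs ! i)) [0..<length xs]"
proof -
  have "map f xs = map f (map ((!) xs) [0..<length xs])" by (simp only: map_nth)
  then show ?thesis by (simp only: map_map o_def)
qed

locale ann_family =
  fixes \<Phi>s :: "ann list" and L :: nat
  assumes not_Nil: "\<Phi>s \<noteq> []"
    and is_ANN_member: "\<And>q. q < length \<Phi>s \<Longrightarrow> is_ANN (\<Phi>s ! q)"
    and length_member: "\<And>q. q < length \<Phi>s \<Longrightarrow> length (\<Phi>s ! q) = L"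
begin

abbreviation "n \<equiv> length \<Phi>s"

lemma n_pos: "0 < n"
  using not_Nil by simp

lemma L_pos: "0 < L"
  using is_ANN_member[OF n_pos] length_member[OF n_pos] is_ANN_not_Nil by fastforce

lemma length_ann_par [simp]: "length (ann_par \<Phi>s) = L"
  unfolding ann_par_def using length_member[OF n_pos] not_Nil by (simp add: hd_conv_nth)

lemma ann_par_not_Nil: "ann_par \<Phi>s \<noteq> []"
  using L_pos by (auto simp flip: length_greater_0_conv)

lemma ann_par_nth: "k < L \<Longrightarrow> ann_par \<Phi>s ! k =
   (block_diag (map (\<lambda>q. fst (\<Phi>s ! q ! k)) [0..<n]), stack_vec (map (\<lambda>q. snd (\<Phi>s ! q ! k)) [0..<n]))"
  unfolding ann_par_def using length_member[OF n_pos] not_Nil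
  by (simp add: hd_conv_nth map_conv_map_nth[of _ \<Phi>s])

lemma dims_ann_par_nth:
  assumes "k < L"
  shows "dim_row (fst (ann_par \<Phi>s ! k)) = (\<Sum>q<n. dim_row (fst (\<Phi>s ! q ! k)))"
    "dim_col (fst (ann_par \<Phi>s ! k)) = (\<Sum>q<n. dim_col (fst (\<Phi>s ! q ! k)))"
    "dim_vec (snd (ann_par \<Phi>s ! k)) = (\<Sum>q<n. dim_vec (snd (\<Phi>s ! q ! k)))"
  using assms by (simp_all add: ann_par_nth dim_block_diag dim_stack_vec o_def sum_list_map_upt)

lemma layer_dims:
  assumes "q < n" "k < L"
  shows "dim_row (fst (\<Phi>s ! q ! k)) = dim_vec (snd (\<Phi>s ! q ! k))
     \<and> 0 < dim_row (fst (\<Phi>s ! q ! k)) \<and> 0 < dim_col (fst (\<Phi>s ! q ! k))"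
  using is_ANN_member[OF assms(1)] length_member[OF assms(1)] assms(2) unfolding is_ANN_def by blast

lemma layer_chain:
  assumes "q < n" "Suc k < L"
  shows "dim_col (fst (\<Phi>s ! q ! Suc k)) = dim_row (fst (\<Phi>s ! q ! k))"
  using is_ANN_member[OF assms(1)] length_member[OF assms(1)] assms(2) unfolding is_ANN_def by simp

lemma is_ANN_ann_par: "is_ANN (ann_par \<Phi>s)"
  unfolding is_ANN_def
proof (intro conjI allI impI)
  fix k assume "k < length (ann_par \<Phi>s)"
  then have k: "k < L" by simp
  have "(\<Sum>q<n. dim_row (fst (\<Phi>s ! q ! k))) = (\<Sum>q<n. dim_vec (snd (\<Phi>s ! q ! k)))"
    using layer_dims[OF _ k] by (intro sum.cong) auto
  moreover have "\<And>q. q < n \<Longrightarrow> 0 < dim_row (fst (\<Phi>s ! q ! k))" "\<And>q. q < n \<Longrightarrow> 0 < dim_col (fst (\<Phi>s ! q ! k))"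
    using layer_dims[OF _ k] by blast+
  then have "0 < (\<Sum>q<n. dim_row (fst (\<Phi>s ! q ! k)))" "0 < (\<Sum>q<n. dim_col (fst (\<Phi>s ! q ! k)))"
    using n_pos by (auto intro!: sum_pos)
  ultimately show "dim_row (fst (ann_par \<Phi>s ! k)) = dim_vec (snd (ann_par \<Phi>s ! k))"
    "0 < dim_row (fst (ann_par \<Phi>s ! k))" "0 < dim_col (fst (ann_par \<Phi>s ! k))"
    using dims_ann_par_nth[OF k] by simp_all
next
  fix k assume "Suc k < length (ann_par \<Phi>s)"
  then have k: "Suc k < L" by simp
  have "(\<Sum>q<n. dim_col (fst (\<Phi>s ! q ! Suc k))) = (\<Sum>q<n. dim_row (fst (\<Phi>s ! q ! k)))"
    using layer_chain[OF _ k] by (intro sum.cong) auto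
  then show "dim_col (fst (ann_par \<Phi>s ! Suc k)) = dim_row (fst (ann_par \<Phi>s ! k))"
    using dims_ann_par_nth k by simp
qed (rule ann_par_not_Nil)

lemma ann_D_member_nth:
  "q < n \<Longrightarrow> j \<le> L \<Longrightarrow> ann_D (\<Phi>s ! q) ! j = (if j = 0 then ann_I (\<Phi>s ! q) else dim_row (fst (\<Phi>s ! q ! (j - 1))))"
  unfolding ann_D_def using length_member by (cases j) auto

lemma ann_D_ann_par: "ann_D (ann_par \<Phi>s) = map (\<lambda>j. \<Sum>q<n. ann_D (\<Phi>s ! q) ! j) [0..<Suc L]"
proof (rule nth_equalityI)
  fix j assume "j < length (ann_D (ann_par \<Phi>s))"
  then have j: "j \<le> L" by simp
  show "ann_D (ann_par \<Phi>s) ! j = map (\<lambda>j. \<Sum>q<n. ann_D (\<Phi>s ! q) ! j) [0..<Suc L] ! j"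
  proof (cases j)
    case 0
    have "ann_I (ann_par \<Phi>s) = (\<Sum>q<n. ann_I (\<Phi>s ! q))"
      using dims_ann_par_nth(2)[OF L_pos] ann_par_not_Nil is_ANN_member is_ANN_not_Nil
      unfolding ann_I_def by (simp add: hd_conv_nth)
    then show ?thesis using ann_D_member_nth[of _ 0] 0 unfolding ann_D_def by (simp del: upt_Suc)
  next
    case (Suc k)
    then have "ann_D (ann_par \<Phi>s) ! j = dim_row (fst (ann_par \<Phi>s ! k))"
      unfolding ann_D_def using j by simp
    also have "\<dots> = (\<Sum>q<n. ann_D (\<Phi>s ! q) ! j)"
      using dims_ann_par_nth(1) ann_D_member_nth[OF _ j] Suc j by simp
    finally show ?thesis using j by (simp del: upt_Suc)
  qed
qed simp

lemma ann_I_ann_par: "ann_I (ann_par \<Phi>s) = (\<Sum>q<n. ann_I (\<Phi>s ! q))"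
  using arg_cong[OF ann_D_ann_par, of hd] by (simp del: upt_Suc add: upt_conv_Cons)

lemma ann_O_ann_par: "ann_O (ann_par \<Phi>s) = (\<Sum>q<n. ann_O (\<Phi>s ! q))"
proof -
  have "ann_O (ann_par \<Phi>s) = (\<Sum>q<n. ann_D (\<Phi>s ! q) ! L)"
    using arg_cong[OF ann_D_ann_par, of last] ann_par_not_Nil by simp
  also have "\<dots> = (\<Sum>q<n. ann_O (\<Phi>s ! q))"
  proof (rule sum.cong[OF refl])
    fix q assume "q \<in> {..<n}"
    then have "\<Phi>s ! q \<noteq> []" "length (\<Phi>s ! q) = L" using is_ANN_member is_ANN_not_Nil length_member by auto
    then show "ann_D (\<Phi>s ! q) ! L = ann_O (\<Phi>s ! q)" using last_ann_D[of "\<Phi>s ! q"] by (simp add: last_conv_nth)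
  qed
  finally show ?thesis .
qed

end

lemma realize_hd_tl:
  "\<Phi> \<noteq> [] \<Longrightarrow> realize a \<Phi> x = (let y = fst (hd \<Phi>) *\<^sub>v x + snd (hd \<Phi>) in
     if tl \<Phi> = [] then y else realize a (tl \<Phi>) (map_vec a y))"
  by (cases \<Phi>) (auto simp: realize_Cons)

lemma is_ANN_tl:
  assumes "is_ANN \<Phi>" "length \<Phi> = Suc L" "L \<noteq> 0" "x \<in> carrier_vec (ann_I \<Phi>)"
  shows "is_ANN (tl \<Phi>)" "length (tl \<Phi>) = L" "fst (\<Phi> ! 0) *\<^sub>v x + snd (\<Phi> ! 0) \<in> carrier_vec (ann_I (tl \<Phi>))"
proof -
  obtain W B \<Phi>' where \<Phi>: "\<Phi> = (W, B) # \<Phi>'" and "length \<Phi>' = L"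
    using assms(2) by (metis length_Suc_conv surj_pair)
  then have "\<Phi>' \<noteq> []" "is_ANN \<Phi>'" "ann_I \<Phi>' = dim_row W" "dim_vec B = dim_row W"
    using assms(1,3) unfolding \<Phi> is_ANN_Cons_iff by auto
  moreover have "x \<in> carrier_vec (dim_col W)" using assms(4) unfolding \<Phi> by simp
  ultimately show "is_ANN (tl \<Phi>)" "length (tl \<Phi>) = L" "fst (\<Phi> ! 0) *\<^sub>v x + snd (\<Phi> ! 0) \<in> carrier_vec (ann_I (tl \<Phi>))"
    using affine_carrier[of x W B] \<open>length \<Phi>' = L\<close> unfolding \<Phi> by simp_all
qed

lemma realize_ann_par_step:
  assumes ne: "\<Phi>s \<noteq> []" and wf: "\<And>q. q < length \<Phi>s \<Longrightarrow> is_ANN (\<Phi>s ! q) \<and> length (\<Phi>s ! q) = Suc L"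
    and x: "\<And>q. q < length \<Phi>s \<Longrightarrow> xf q \<in> carrier_vec (ann_I (\<Phi>s ! q))"
  defines "y \<equiv> \<lambda>q. fst (\<Phi>s ! q ! 0) *\<^sub>v xf q + snd (\<Phi>s ! q ! 0)"
  shows "realize a (ann_par \<Phi>s) (stack_vec (map xf [0..<length \<Phi>s])) =
      (if L = 0 then stack_vec (map y [0..<length \<Phi>s])
       else realize a (ann_par (map tl \<Phi>s)) (stack_vec (map (\<lambda>q. map_vec a (y q)) [0..<length \<Phi>s])))"
proof -
  let ?n = "length \<Phi>s"
  define W where "W q = fst (\<Phi>s ! q ! 0)" for q
  define B where "B q = snd (\<Phi>s ! q ! 0)" for q
  have members: "\<forall>\<Phi>\<in>set \<Phi>s. \<Phi> \<noteq> []" using wf by (metis in_set_conv_nth length_0_conv nat.distinct(1))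
  have hd: "length (hd \<Phi>s) = Suc L" using ne wf by (simp add: hd_conv_nth)
  have par: "ann_par \<Phi>s = (block_diag (map W [0..<?n]), stack_vec (map B [0..<?n])) # ann_par (map tl \<Phi>s)"
    unfolding ann_par_Cons[OF ne hd members] W_def B_def by (simp add: map_conv_map_nth[of _ \<Phi>s])
  have tail: "ann_par (map tl \<Phi>s) = [] \<longleftrightarrow> L = 0"
    unfolding ann_par_def using ne hd by (simp add: hd_map)
  have dims: "dim_col (W q) = dim_vec (xf q)" "dim_row (W q) = dim_vec (B q)" if "q < ?n" for q
    using x[OF that] wf[OF that] unfolding W_def B_def is_ANN_def ann_I_def by (auto simp: hd_conv_nth)
  have "block_diag (map W [0..<?n]) *\<^sub>v stack_vec (map xf [0..<?n]) = stack_vec (map (\<lambda>q. W q *\<^sub>v xf q) [0..<?n])"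
    by (rule block_diag_mult_stack_vec) (simp add: dims)
  moreover have "stack_vec (map (\<lambda>q. W q *\<^sub>v xf q) [0..<?n]) + stack_vec (map B [0..<?n])
      = stack_vec (map (\<lambda>q. W q *\<^sub>v xf q + B q) [0..<?n])"
    by (rule stack_vec_add) (simp add: dims)
  ultimately have "block_diag (map W [0..<?n]) *\<^sub>v stack_vec (map xf [0..<?n]) + stack_vec (map B [0..<?n])
      = stack_vec (map y [0..<?n])"
    unfolding y_def W_def B_def by simp
  then show ?thesis unfolding par realize_Cons using tail by (simp add: map_vec_stack_vec o_def)
qed

lemma realize_ann_par:
  assumes "\<Phi>s \<noteq> []" "\<And>q. q < length \<Phi>s \<Longrightarrow> is_ANN (\<Phi>s ! q) \<and> length (\<Phi>s ! q) = L"
    "\<And>q. q < length \<Phi>s \<Longrightarrow> xf q \<in> carrier_vec (ann_I (\<Phi>s ! q))"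
  shows "realize a (ann_par \<Phi>s) (stack_vec (map xf [0..<length \<Phi>s]))
       = stack_vec (map (\<lambda>q. realize a (\<Phi>s ! q) (xf q)) [0..<length \<Phi>s])"
  using assms
proof (induction L arbitrary: \<Phi>s xf)
  case 0
  then show ?case using is_ANN_not_Nil by (metis length_0_conv length_greater_0_conv)
next
  case (Suc L)
  define y where "y q = fst (\<Phi>s ! q ! 0) *\<^sub>v xf q + snd (\<Phi>s ! q ! 0)" for q
  have member: "realize a (\<Phi>s ! q) (xf q) = (if L = 0 then y q else realize a (tl (\<Phi>s ! q)) (map_vec a (y q)))"
    if "q < length \<Phi>s" for q
    using Suc.prems(2)[OF that] is_ANN_not_Nil realize_hd_tl[of "\<Phi>s ! q" a "xf q"]
    unfolding y_def by (cases "\<Phi>s ! q") auto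
  show ?case
  proof (cases "L = 0")
    case False
    have tail: "is_ANN (tl (\<Phi>s ! q)) \<and> length (tl (\<Phi>s ! q)) = L
        \<and> map_vec a (y q) \<in> carrier_vec (ann_I (tl (\<Phi>s ! q)))" if "q < length \<Phi>s" for q
      using is_ANN_tl[of "\<Phi>s ! q" L "xf q"] Suc.prems(2,3)[OF that] False unfolding y_def by simp
    have "realize a (ann_par (map tl \<Phi>s)) (stack_vec (map (\<lambda>q. map_vec a (y q)) [0..<length \<Phi>s]))
        = stack_vec (map (\<lambda>q. realize a (tl (\<Phi>s ! q)) (map_vec a (y q))) [0..<length \<Phi>s])"
    proof -
      have "realize a (ann_par (map tl \<Phi>s)) (stack_vec (map (\<lambda>q. map_vec a (y q)) [0..<length (map tl \<Phi>s)]))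
          = stack_vec (map (\<lambda>q. realize a (map tl \<Phi>s ! q) (map_vec a (y q))) [0..<length (map tl \<Phi>s)])"
        by (rule Suc.IH) (use Suc.prems(1) tail in auto)
      moreover have "map (\<lambda>q. realize a (map tl \<Phi>s ! q) (map_vec a (y q))) [0..<length \<Phi>s]
          = map (\<lambda>q. realize a (tl (\<Phi>s ! q)) (map_vec a (y q))) [0..<length \<Phi>s]"
        by (rule map_upt_cong) simp
      ultimately show ?thesis by (simp only: length_map)
    qed
    then show ?thesis using realize_ann_par_step[OF Suc.prems, of a] member False
      unfolding y_def by (simp cong: map_upt_cong)
  qed (use realize_ann_par_step[OF Suc.prems, of a] member y_def in \<open>simp cong: map_upt_cong\<close>)
qed

locale summable_family = ann_family +
  fixes m p :: nat
  assumes ann_I_member: "\<And>q. q < length \<Phi>s \<Longrightarrow> ann_I (\<Phi>s ! q) = m"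
    and ann_O_member: "\<And>q. q < length \<Phi>s \<Longrightarrow> ann_O (\<Phi>s ! q) = p"
begin

lemma m_pos: "0 < m"
  using ann_I_pos[OF is_ANN_member[OF n_pos]] ann_I_member[OF n_pos] by simp

lemma p_pos: "0 < p"
  using ann_O_pos[OF is_ANN_member[OF n_pos]] ann_O_member[OF n_pos] by simp

lemma ann_sum_eq: "ann_sum \<Phi>s = ann_comp (ann_S p n) (ann_comp (ann_par \<Phi>s) (ann_T m n))"
  unfolding ann_sum_def using ann_I_member[OF n_pos] ann_O_member[OF n_pos] not_Nil
  by (simp add: hd_conv_nth)

lemma ann_T_simps:
  "is_ANN (ann_T m n)" "ann_T m n \<noteq> []" "ann_I (ann_T m n) = m" "ann_O (ann_T m n) = n * m"
  "length (ann_T m n) = 1" "ann_D (ann_T m n) = [m, n * m]"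
  using m_pos n_pos by (auto simp: ann_T_def id_row_blocks_def intro!: is_ANN_ann_A)

lemma realize_ann_T: "x \<in> carrier_vec m \<Longrightarrow> realize a (ann_T m n) x = stack_vec (map (\<lambda>_. x) [0..<n])"
  using transpose_id_row_blocks_mult[of x m n] dim_stack_vec_const[of n "\<lambda>_. x" m]
  by (auto simp: ann_T_def intro!: right_zero_vec carrier_vecI)

lemma ann_S_simps:
  "is_ANN (ann_S p n)" "ann_S p n \<noteq> []" "ann_I (ann_S p n) = n * p" "ann_O (ann_S p n) = p"
  "length (ann_S p n) = 1" "ann_D (ann_S p n) = [n * p, p]"
  "realize a (ann_S p n) y = id_row_blocks p n *\<^sub>v y + 0\<^sub>v p"
  using p_pos n_pos by (auto simp: ann_S_def id_row_blocks_def intro!: is_ANN_ann_A)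

lemma ann_I_ann_par': "ann_I (ann_par \<Phi>s) = n * m"
  unfolding ann_I_ann_par using ann_I_member by simp

lemma ann_O_ann_par': "ann_O (ann_par \<Phi>s) = n * p"
  unfolding ann_O_ann_par using ann_O_member by simp

lemma is_ANN_copy_par: "is_ANN (ann_comp (ann_par \<Phi>s) (ann_T m n))"
  by (rule is_ANN_ann_comp) (simp_all add: is_ANN_ann_par ann_T_simps ann_I_ann_par')

lemma realize_copy_par:
  assumes "x \<in> carrier_vec m"
  shows "realize a (ann_comp (ann_par \<Phi>s) (ann_T m n)) x = stack_vec (map (\<lambda>q. realize a (\<Phi>s ! q) x) [0..<n])"
proof -
  have "realize a (ann_comp (ann_par \<Phi>s) (ann_T m n)) x = realize a (ann_par \<Phi>s) (stack_vec (map (\<lambda>_. x) [0..<n]))"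
    using assms by (simp add: realize_ann_comp is_ANN_ann_par ann_T_simps realize_ann_T ann_I_ann_par')
  also have "\<dots> = stack_vec (map (\<lambda>q. realize a (\<Phi>s ! q) x) [0..<n])"
    by (rule realize_ann_par[OF not_Nil]) (use is_ANN_member length_member ann_I_member assms in auto)
  finally show ?thesis .
qed

lemma ann_sum_simps:
  "is_ANN (ann_sum \<Phi>s)" "ann_I (ann_sum \<Phi>s) = m" "ann_O (ann_sum \<Phi>s) = p" "length (ann_sum \<Phi>s) = L"
  unfolding ann_sum_eq using is_ANN_copy_par L_pos ann_par_not_Nil
  by (simp_all add: is_ANN_ann_comp ann_S_simps ann_T_simps ann_O_ann_par')

lemma realize_ann_sum:
  assumes "x \<in> carrier_vec m" "i < p"
  shows "realize a (ann_sum \<Phi>s) x $ i = (\<Sum>q<n. realize a (\<Phi>s ! q) x $ i)"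
proof -
  have members: "\<And>q. q < n \<Longrightarrow> realize a (\<Phi>s ! q) x \<in> carrier_vec p"
    using realize_carrier is_ANN_member ann_I_member ann_O_member assms(1) by metis
  have "realize a (ann_sum \<Phi>s) x = id_row_blocks p n *\<^sub>v stack_vec (map (\<lambda>q. realize a (\<Phi>s ! q) x) [0..<n]) + 0\<^sub>v p"
    unfolding ann_sum_eq using assms(1) ann_par_not_Nil
    by (simp add: realize_ann_comp[OF ann_S_simps(1) is_ANN_copy_par] realize_copy_par ann_S_simps
        ann_O_ann_par' ann_T_simps)
  then show ?thesis using assms(2) id_row_blocks_mult_stack_vec[OF members assms(2)]
    by (simp add: id_row_blocks_def)
qed

lemma ann_D_ann_sum:
  "ann_D (ann_sum \<Phi>s) = butlast (m # tl (map (\<lambda>j. \<Sum>q<n. ann_D (\<Phi>s ! q) ! j) [0..<Suc L])) @ [p]"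
  unfolding ann_sum_eq ann_D_ann_comp[OF ann_S_simps(2) ann_comp_not_Nil]
    ann_D_ann_comp[OF ann_par_not_Nil ann_T_simps(2)]
  by (simp add: ann_D_ann_par ann_S_simps ann_T_simps del: upt_Suc)

lemma maxnorm_ann_D_ann_sum_le: "maxnorm (ann_D (ann_sum \<Phi>s)) \<le> (\<Sum>q<n. maxnorm (ann_D (\<Phi>s ! q)))"
proof -
  let ?S = "\<Sum>q<n. maxnorm (ann_D (\<Phi>s ! q))"
  have first: "maxnorm (ann_D (\<Phi>s ! 0)) \<le> ?S" using n_pos by (intro member_le_sum) auto
  have "m \<le> ?S" "p \<le> ?S"
    using first ann_I_le_maxnorm[of "\<Phi>s ! 0"] ann_O_le_maxnorm[of "\<Phi>s ! 0"] ann_I_member[OF n_pos]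
      ann_O_member[OF n_pos] is_ANN_not_Nil[OF is_ANN_member[OF n_pos]] by simp_all
  moreover have "(\<Sum>q<n. ann_D (\<Phi>s ! q) ! j) \<le> ?S" if "j \<le> L" for j
  proof (rule sum_mono)
    fix q assume "q \<in> {..<n}"
    then have "ann_D (\<Phi>s ! q) ! j \<in> set (ann_D (\<Phi>s ! q))" using length_member that by simp
    then show "ann_D (\<Phi>s ! q) ! j \<le> maxnorm (ann_D (\<Phi>s ! q))" by (rule maxnorm_ge)
  qed
  moreover have "set (ann_D (ann_sum \<Phi>s)) \<subseteq> {m, p} \<union> set (map (\<lambda>j. \<Sum>q<n. ann_D (\<Phi>s ! q) ! j) [0..<Suc L])"
    unfolding ann_D_ann_sum by (auto dest!: in_set_butlastD list.set_sel(2)[rotated] simp del: upt_Suc)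
  ultimately show ?thesis by (auto simp: maxnorm_le_iff simp del: upt_Suc)
qed

end

lemma ann_D_ann_sum_cong:
  assumes "summable_family \<Phi>s L m p" "summable_family \<Psi>s L m p" "map ann_D \<Phi>s = map ann_D \<Psi>s"
  shows "ann_D (ann_sum \<Phi>s) = ann_D (ann_sum \<Psi>s)"
proof -
  interpret \<Phi>: summable_family \<Phi>s L m p by (rule assms(1))
  interpret \<Psi>: summable_family \<Psi>s L m p by (rule assms(2))
  have "length \<Phi>s = length \<Psi>s" "\<And>q. q < length \<Phi>s \<Longrightarrow> ann_D (\<Phi>s ! q) = ann_D (\<Psi>s ! q)"
    using assms(3) by (metis length_map, metis length_map nth_map)
  then show ?thesis unfolding \<Phi>.ann_D_ann_sum \<Psi>.ann_D_ann_sum by simp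
qed

lemma ann_sum_not_Nil [simp]: "ann_sum \<Phi>s \<noteq> []"
  unfolding ann_sum_def by simp

lemma ann_boxplus_not_Nil [simp]: "ann_boxplus \<Psi> \<Phi>s \<noteq> []"
  unfolding ann_boxplus_def by simp

section \<open>Padding with an identity network\<close>

lemma set_butlast_append_tl: "set (butlast xs @ tl ys) \<subseteq> set xs \<union> set ys"
proof -
  have "set (tl ys) \<subseteq> set ys" by (cases ys) auto
  then show ?thesis by (auto dest: in_set_butlastD)
qed

locale identity_ann =
  fixes J :: ann and dd :: nat and a :: "real \<Rightarrow> real"
  assumes is_ANN_J: "is_ANN J" and ann_D_J: "ann_D J = [1, dd, 1]"
    and realize_J: "\<And>x. x \<in> carrier_vec 1 \<Longrightarrow> realize a J x = x"
begin

lemma J_simps: "J \<noteq> []" "ann_I J = 1" "ann_O J = 1" "length J = 2"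
  using is_ANN_not_Nil[OF is_ANN_J] ann_D_J last_ann_D[of J] hd_ann_D[of J] length_ann_D[of J] by simp_all

lemma ann_pow_simps [simp]:
  "ann_pow J k \<noteq> []" "ann_I (ann_pow J k) = 1" "ann_O (ann_pow J k) = 1" "length (ann_pow J k) = Suc k"
  by (induction k) (simp_all add: J_simps)

lemma is_ANN_ann_pow: "is_ANN (ann_pow J k)"
  by (induction k) (simp_all add: J_simps is_ANN_J is_ANN_ann_comp is_ANN_Cons_iff)

lemma set_ann_D_ann_pow: "set (ann_D (ann_pow J k)) \<subseteq> {1, dd}"
proof (induction k)
  case (Suc k)
  then show ?case using set_butlast_append_tl[of "ann_D (ann_pow J k)" "ann_D J"] ann_D_J
    by (auto simp: ann_D_ann_comp J_simps)
qed (simp add: J_simps ann_D_def)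

lemma realize_ann_pow: "x \<in> carrier_vec 1 \<Longrightarrow> realize a (ann_pow J k) x = x"
  by (induction k) (simp_all add: J_simps realize_ann_comp is_ANN_J is_ANN_ann_pow realize_J realize_Cons)

lemma ann_ext_simps:
  assumes "is_ANN \<Phi>" "ann_O \<Phi> = 1" "length \<Phi> \<le> L"
  shows "is_ANN (ann_ext L J \<Phi>)" "ann_I (ann_ext L J \<Phi>) = ann_I \<Phi>" "ann_O (ann_ext L J \<Phi>) = 1"
    "length (ann_ext L J \<Phi>) = L"
    "ann_D (ann_ext L J \<Phi>) = butlast (ann_D \<Phi>) @ tl (ann_D (ann_pow J (L - length \<Phi>)))"
  using assms is_ANN_not_Nil[OF assms(1)]
  by (simp_all add: ann_ext_def ann_L_def is_ANN_ann_comp is_ANN_ann_pow ann_D_ann_comp)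

lemma maxnorm_ann_D_ann_ext_le:
  assumes "is_ANN \<Phi>" "ann_O \<Phi> = 1" "length \<Phi> \<le> L"
  shows "maxnorm (ann_D (ann_ext L J \<Phi>)) \<le> max (maxnorm (ann_D \<Phi>)) dd"
proof -
  have "y \<le> max (maxnorm (ann_D \<Phi>)) dd" if y: "y \<in> set (ann_D (ann_ext L J \<Phi>))" for y
  proof -
    have "y \<in> set (ann_D \<Phi>) \<union> {1, dd}"
      using y set_butlast_append_tl[of "ann_D \<Phi>" "ann_D (ann_pow J (L - length \<Phi>))"] set_ann_D_ann_pow
      unfolding ann_ext_simps(5)[OF assms] by blast
    then show ?thesis using maxnorm_ge[of y "ann_D \<Phi>"] one_le_maxnorm_ann_D[OF assms(1)] by auto
  qed
  then show ?thesis by (simp add: maxnorm_le_iff)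
qed

lemma realize_ann_ext:
  assumes "is_ANN \<Phi>" "ann_O \<Phi> = 1" "x \<in> carrier_vec (ann_I \<Phi>)"
  shows "realize a (ann_ext L J \<Phi>) x = realize a \<Phi> x"
  using assms realize_carrier[OF assms(1,3)]
  by (simp add: ann_ext_def realize_ann_comp is_ANN_ann_pow realize_ann_pow)

lemma boxplus_summable_family:
  assumes "\<Phi>s \<noteq> []" "\<And>\<Phi>. \<Phi> \<in> set \<Phi>s \<Longrightarrow> is_ANN \<Phi> \<and> ann_I \<Phi> = m \<and> ann_O \<Phi> = 1"
  shows "summable_family (map (ann_ext (Max (set (map ann_L \<Phi>s))) J) \<Phi>s) (Max (set (map ann_L \<Phi>s))) m 1"
proof -
  have "length \<Phi> \<le> Max (set (map ann_L \<Phi>s))" if "\<Phi> \<in> set \<Phi>s" for \<Phi>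
    using that by (simp add: ann_L_def)
  then show ?thesis using assms by unfold_locales (auto simp: ann_ext_simps)
qed

lemma ann_boxplus_simps:
  assumes "\<Phi>s \<noteq> []" "\<And>\<Phi>. \<Phi> \<in> set \<Phi>s \<Longrightarrow> is_ANN \<Phi> \<and> ann_I \<Phi> = m \<and> ann_O \<Phi> = 1"
  shows "is_ANN (ann_boxplus J \<Phi>s)" "ann_I (ann_boxplus J \<Phi>s) = m" "ann_O (ann_boxplus J \<Phi>s) = 1"
    "length (ann_boxplus J \<Phi>s) = Max (set (map ann_L \<Phi>s))"
  using summable_family.ann_sum_simps[OF boxplus_summable_family[OF assms]] unfolding ann_boxplus_def by simp_all

lemma sum_lessThan_nth: "(\<Sum>q<length xs. f (xs ! q)) = (\<Sum>x\<leftarrow>xs. f x)"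
  by (simp add: sum_list_sum_nth atLeast0LessThan)

lemma realize_ann_boxplus:
  assumes "\<Phi>s \<noteq> []" "\<And>\<Phi>. \<Phi> \<in> set \<Phi>s \<Longrightarrow> is_ANN \<Phi> \<and> ann_I \<Phi> = m \<and> ann_O \<Phi> = 1"
    and "x \<in> carrier_vec m"
  shows "realize a (ann_boxplus J \<Phi>s) x $ 0 = (\<Sum>\<Phi>\<leftarrow>\<Phi>s. realize a \<Phi> x $ 0)"
proof -
  let ?L = "Max (set (map ann_L \<Phi>s))"
  have "realize a (ann_boxplus J \<Phi>s) x $ 0 = (\<Sum>q<length \<Phi>s. realize a (ann_ext ?L J (\<Phi>s ! q)) x $ 0)"
    using summable_family.realize_ann_sum[OF boxplus_summable_family[OF assms(1,2)] assms(3)]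
    unfolding ann_boxplus_def by simp
  also have "\<dots> = (\<Sum>q<length \<Phi>s. realize a (\<Phi>s ! q) x $ 0)"
    using assms(2,3) by (intro sum.cong refl) (simp add: realize_ann_ext)
  finally show ?thesis using sum_lessThan_nth[of "\<lambda>\<Phi>. realize a \<Phi> x $ 0" \<Phi>s] by simp
qed

lemma maxnorm_ann_D_ann_boxplus_le:
  assumes "\<Phi>s \<noteq> []" "\<And>\<Phi>. \<Phi> \<in> set \<Phi>s \<Longrightarrow> is_ANN \<Phi> \<and> ann_I \<Phi> = m \<and> ann_O \<Phi> = 1"
  shows "maxnorm (ann_D (ann_boxplus J \<Phi>s)) \<le> (\<Sum>\<Phi>\<leftarrow>\<Phi>s. max (maxnorm (ann_D \<Phi>)) dd)"
proof -
  let ?L = "Max (set (map ann_L \<Phi>s))"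
  have "maxnorm (ann_D (ann_boxplus J \<Phi>s)) \<le> (\<Sum>q<length \<Phi>s. maxnorm (ann_D (ann_ext ?L J (\<Phi>s ! q))))"
    using summable_family.maxnorm_ann_D_ann_sum_le[OF boxplus_summable_family[OF assms]]
    unfolding ann_boxplus_def by simp
  also have "\<dots> \<le> (\<Sum>q<length \<Phi>s. max (maxnorm (ann_D (\<Phi>s ! q))) dd)"
    using assms(2) by (intro sum_mono maxnorm_ann_D_ann_ext_le) (auto simp: ann_L_def)
  finally show ?thesis using sum_lessThan_nth[of "\<lambda>\<Phi>. max (maxnorm (ann_D \<Phi>)) dd" \<Phi>s] by simp
qed

lemma ann_D_ann_boxplus_cong:
  assumes "\<Phi>s \<noteq> []" "\<And>\<Phi>. \<Phi> \<in> set \<Phi>s \<Longrightarrow> is_ANN \<Phi> \<and> ann_I \<Phi> = m \<and> ann_O \<Phi> = 1"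
    and "\<And>\<Psi>. \<Psi> \<in> set \<Psi>s \<Longrightarrow> is_ANN \<Psi> \<and> ann_I \<Psi> = m \<and> ann_O \<Psi> = 1"
    and D: "map ann_D \<Phi>s = map ann_D \<Psi>s"
  shows "ann_D (ann_boxplus J \<Phi>s) = ann_D (ann_boxplus J \<Psi>s)"
proof -
  have "map ann_L \<Phi>s = map length \<Phi>s" "map ann_L \<Psi>s = map length \<Psi>s"
    by (simp_all add: ann_L_def)
  moreover have "map length \<Phi>s = map length \<Psi>s"
    using arg_cong[OF D, of "map (\<lambda>xs. length xs - 1)"] by (simp add: o_def)
  ultimately have L: "Max (set (map ann_L \<Phi>s)) = Max (set (map ann_L \<Psi>s))" by simp
  have "\<Psi>s \<noteq> []" using assms(1) D by auto
  moreover have "map ann_D (map (ann_ext (Max (set (map ann_L \<Phi>s))) J) \<Phi>s)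
      = map ann_D (map (ann_ext (Max (set (map ann_L \<Phi>s))) J) \<Psi>s)"
  proof (rule nth_equalityI)
    fix q assume "q < length (map ann_D (map (ann_ext (Max (set (map ann_L \<Phi>s))) J) \<Phi>s))"
    then have q: "q < length \<Phi>s" "q < length \<Psi>s" and "ann_D (\<Phi>s ! q) = ann_D (\<Psi>s ! q)"
      using D by (auto dest: map_eq_imp_length_eq) (metis D nth_map map_eq_imp_length_eq)
    moreover have "length (\<Phi>s ! q) = length (\<Psi>s ! q)"
      using arg_cong[OF \<open>ann_D (\<Phi>s ! q) = ann_D (\<Psi>s ! q)\<close>, of length] by simp
    moreover have "\<Phi>s ! q \<noteq> []" "\<Psi>s ! q \<noteq> []" using assms(2,3) q nth_mem is_ANN_not_Nil by blast+
    ultimately show "map ann_D (map (ann_ext (Max (set (map ann_L \<Phi>s))) J) \<Phi>s) ! q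
        = map ann_D (map (ann_ext (Max (set (map ann_L \<Phi>s))) J) \<Psi>s) ! q"
      using assms(2,3) q by (simp add: ann_ext_def ann_L_def ann_D_ann_comp)
  qed (use D in \<open>auto dest: map_eq_imp_length_eq\<close>)
  ultimately show ?thesis
    using ann_D_ann_sum_cong[OF boxplus_summable_family[OF assms(1,2)]] boxplus_summable_family[of \<Psi>s m] assms(3)
    unfolding ann_boxplus_def L by simp
qed

end

section \<open>Continuity and parameter count\<close>

lemma continuous_eps_delta:
  assumes "continuous_on UNIV (a::real\<Rightarrow>real)" "e > 0"
  shows "\<exists>d>0. \<forall>y. \<bar>y - x\<bar> < d \<longrightarrow> \<bar>a y - a x\<bar> < e"
proof -
  have "isCont a x" using assms(1) by (simp add: continuous_on_eq_continuous_at)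
  then have "a \<midarrow>x\<rightarrow> a x" by (simp add: isCont_def)
  then obtain s where s: "s > 0" "\<forall>y. y \<noteq> x \<and> norm (y - x) < s \<longrightarrow> norm (a y - a x) < e"
    using assms(2) unfolding LIM_eq by blast
  show ?thesis
  proof (intro exI[of _ s] conjI allI impI)
    fix y assume "\<bar>y - x\<bar> < s"
    then show "\<bar>a y - a x\<bar> < e" using s assms(2) by (cases "y = x") auto
  qed (use s in auto)
qed

lemma in_C_comp:
  assumes f: "in_C m n f" and g: "in_C n p g"
  shows "in_C m p (\<lambda>x. g (f x))"
  unfolding in_C_def
proof (intro conjI ballI allI impI)
  fix x :: "real vec" assume x: "x \<in> carrier_vec m"
  then have fx: "f x \<in> carrier_vec n" using f unfolding in_C_def by blast
  then show "g (f x) \<in> carrier_vec p" using g unfolding in_C_def by blast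
  fix e :: real assume e: "0 < e"
  obtain d1 where d1: "d1 > 0" "\<forall>z \<in> carrier_vec n. (\<forall>i<n. \<bar>z $ i - f x $ i\<bar> < d1) \<longrightarrow> (\<forall>j<p. \<bar>g z $ j - g (f x) $ j\<bar> < e)"
    using g fx e unfolding in_C_def by blast
  obtain d where d: "d > 0" "\<forall>y \<in> carrier_vec m. (\<forall>i<m. \<bar>y $ i - x $ i\<bar> < d) \<longrightarrow> (\<forall>j<n. \<bar>f y $ j - f x $ j\<bar> < d1)"
    using f x d1(1) unfolding in_C_def by blast
  show "\<exists>d>0. \<forall>y\<in>carrier_vec m. (\<forall>i<m. \<bar>y $ i - x $ i\<bar> < d) \<longrightarrow> (\<forall>j<p. \<bar>g (f y) $ j - g (f x) $ j\<bar> < e)"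
  proof (intro exI[of _ d] conjI ballI impI)
    show "0 < d" by (rule d(1))
    fix y :: "real vec" assume y: "y \<in> carrier_vec m" and yd: "\<forall>i<m. \<bar>y $ i - x $ i\<bar> < d"
    have fy: "f y \<in> carrier_vec n" using f y unfolding in_C_def by blast
    have "\<forall>j<n. \<bar>f y $ j - f x $ j\<bar> < d1" using d(2) y yd by blast
    then show "\<forall>j<p. \<bar>g (f y) $ j - g (f x) $ j\<bar> < e" using d1(2) fy by blast
  qed
qed

lemma in_C_map_vec:
  assumes a: "continuous_on UNIV a"
  shows "in_C n n (map_vec a)"
  unfolding in_C_def
proof (intro conjI ballI allI impI)
  fix x :: "real vec" assume x: "x \<in> carrier_vec n"
  then show "map_vec a x \<in> carrier_vec n" by simp
  fix e :: real assume e: "0 < e"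
  have "\<forall>i\<in>{..<n}. \<exists>d. d > 0 \<and> (\<forall>z. \<bar>z - x $ i\<bar> < d \<longrightarrow> \<bar>a z - a (x $ i)\<bar> < e)"
    using continuous_eps_delta[OF a e] by blast
  then obtain df where df: "\<forall>i\<in>{..<n}. df i > 0 \<and> (\<forall>z. \<bar>z - x $ i\<bar> < df i \<longrightarrow> \<bar>a z - a (x $ i)\<bar> < e)"
    by (rule bchoice[THEN exE]) blast
  define d where "d = Min (insert 1 (df ` {..<n}))"
  have dpos: "0 < d" unfolding d_def using df by (subst Min_gr_iff) auto
  have dle: "\<And>i. i < n \<Longrightarrow> d \<le> df i" unfolding d_def by (intro Min_le) auto
  show "\<exists>d>0. \<forall>y\<in>carrier_vec n. (\<forall>i<n. \<bar>y $ i - x $ i\<bar> < d) \<longrightarrow> (\<forall>j<n. \<bar>map_vec a y $ j - map_vec a x $ j\<bar> < e)"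
  proof (intro exI[of _ d] conjI ballI impI allI)
    show "0 < d" by (rule dpos)
    fix y :: "real vec" and j assume y: "y \<in> carrier_vec n" and yd: "\<forall>i<n. \<bar>y $ i - x $ i\<bar> < d" and j: "j < n"
    have "\<bar>y $ j - x $ j\<bar> < df j" using yd j dle[OF j] by force
    then have "\<bar>a (y $ j) - a (x $ j)\<bar> < e" using df j by blast
    then show "\<bar>map_vec a y $ j - map_vec a x $ j\<bar> < e" using x y j by simp
  qed
qed

lemma mult_mat_vec_index_diff_le:
  fixes W :: "real mat"
  assumes W: "W \<in> carrier_mat n m" and "x \<in> carrier_vec m" "y \<in> carrier_vec m" "j < n"
    and close: "\<And>i. i < m \<Longrightarrow> \<bar>y $ i - x $ i\<bar> \<le> \<delta>"
  shows "\<bar>(W *\<^sub>v y) $ j - (W *\<^sub>v x) $ j\<bar> \<le> (\<Sum>i<m. \<bar>W $$ (j, i)\<bar>) * \<delta>"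
proof -
  have "(W *\<^sub>v y) $ j - (W *\<^sub>v x) $ j = (\<Sum>i<m. W $$ (j, i) * y $ i) - (\<Sum>i<m. W $$ (j, i) * x $ i)"
    using assms by (simp add: scalar_prod_def row_def lessThan_atLeast0)
  also have "\<dots> = (\<Sum>i<m. W $$ (j, i) * (y $ i - x $ i))" by (simp add: right_diff_distrib sum_subtractf)
  also have "\<bar>\<dots>\<bar> \<le> (\<Sum>i<m. \<bar>W $$ (j, i)\<bar> * \<bar>y $ i - x $ i\<bar>)"
    by (rule order_trans[OF sum_abs]) (simp add: abs_mult)
  also have "\<dots> \<le> (\<Sum>i<m. \<bar>W $$ (j, i)\<bar> * \<delta>)"
    using close by (intro sum_mono mult_left_mono) auto
  finally show ?thesis by (simp add: sum_distrib_right)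
qed

lemma in_C_affine:
  assumes W: "W \<in> carrier_mat n m" and B: "B \<in> carrier_vec n"
  shows "in_C m n (\<lambda>x. W *\<^sub>v x + B)"
  unfolding in_C_def
proof (intro conjI ballI allI impI)
  fix x :: "real vec" assume x: "x \<in> carrier_vec m"
  then show "W *\<^sub>v x + B \<in> carrier_vec n" using W B by simp
  fix e :: real assume e: "0 < e"
  define C where "C = (\<Sum>j<n. \<Sum>i<m. \<bar>W $$ (j, i)\<bar>) + 1"
  have "0 \<le> (\<Sum>j<n. \<Sum>i<m. \<bar>W $$ (j, i)\<bar>)" by (intro sum_nonneg) auto
  moreover have "(\<Sum>i<m. \<bar>W $$ (j, i)\<bar>) \<le> (\<Sum>j<n. \<Sum>i<m. \<bar>W $$ (j, i)\<bar>)" if "j < n" for j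
    using that by (intro member_le_sum) (auto intro: sum_nonneg)
  ultimately have C: "0 < C" "\<And>j. j < n \<Longrightarrow> (\<Sum>i<m. \<bar>W $$ (j, i)\<bar>) \<le> C"
    unfolding C_def by fastforce+
  show "\<exists>\<delta>>0. \<forall>y\<in>carrier_vec m. (\<forall>i<m. \<bar>y $ i - x $ i\<bar> < \<delta>) \<longrightarrow> (\<forall>j<n. \<bar>(W *\<^sub>v y + B) $ j - (W *\<^sub>v x + B) $ j\<bar> < e)"
  proof (intro exI[of _ "e / (2 * C)"] conjI ballI impI allI)
    show "0 < e / (2 * C)" using e C(1) by simp
    fix y :: "real vec" and j assume y: "y \<in> carrier_vec m" and close: "\<forall>i<m. \<bar>y $ i - x $ i\<bar> < e / (2 * C)" and j: "j < n"
    have "\<bar>(W *\<^sub>v y) $ j - (W *\<^sub>v x) $ j\<bar> \<le> (\<Sum>i<m. \<bar>W $$ (j, i)\<bar>) * (e / (2 * C))"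
      using close by (intro mult_mat_vec_index_diff_le[OF W x y j]) (simp add: less_imp_le)
    also have "\<dots> \<le> C * (e / (2 * C))" using C(2)[OF j] e C(1) by (intro mult_right_mono) auto
    also have "\<dots> < e" using e C(1) by simp
    finally show "\<bar>(W *\<^sub>v y + B) $ j - (W *\<^sub>v x + B) $ j\<bar> < e" using W x y B j by simp
  qed
qed

lemma in_C_realize:
  assumes a: "continuous_on UNIV a"
  shows "is_ANN \<Phi> \<Longrightarrow> in_C (ann_I \<Phi>) (ann_O \<Phi>) (realize a \<Phi>)"
proof (induction \<Phi>)
  case (Cons l \<Phi>)
  obtain W B where l: "l = (W, B)" by fastforce
  have "B \<in> carrier_vec (dim_row W)" using Cons.prems unfolding l is_ANN_Cons_iff by (auto intro: carrier_vecI)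
  then have affine: "in_C (dim_col W) (dim_row W) (\<lambda>x. W *\<^sub>v x + B)" by (rule in_C_affine[OF carrier_mat_triv])
  show ?case
  proof (cases "\<Phi> = []")
    case True
    then show ?thesis using affine unfolding l by (simp add: realize_Cons)
  next
    case False
    then have "is_ANN \<Phi>" "ann_I \<Phi> = dim_row W" using Cons.prems unfolding l is_ANN_Cons_iff by auto
    then have "in_C (dim_row W) (ann_O \<Phi>) (realize a \<Phi>)" using Cons.IH by simp
    then have "in_C (dim_col W) (ann_O \<Phi>) (\<lambda>x. realize a \<Phi> (map_vec a (W *\<^sub>v x + B)))"
      using in_C_comp[OF in_C_comp[OF affine in_C_map_vec[OF a]]] by simp
    then show ?thesis using False unfolding l by (simp add: realize_Cons)
  qed
qed (simp add: is_ANN_def)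

lemma layer_dims_le_maxnorm:
  assumes "is_ANN \<Phi>" "k < length \<Phi>"
  shows "dim_row (fst (\<Phi> ! k)) \<le> maxnorm (ann_D \<Phi>)" "dim_col (fst (\<Phi> ! k)) \<le> maxnorm (ann_D \<Phi>)"
proof -
  have row: "dim_row (fst (\<Phi> ! j)) \<le> maxnorm (ann_D \<Phi>)" if "j < length \<Phi>" for j
    using maxnorm_ge[of "ann_D \<Phi> ! Suc j" "ann_D \<Phi>"] that by (simp add: ann_D_def)
  then show "dim_row (fst (\<Phi> ! k)) \<le> maxnorm (ann_D \<Phi>)" using assms(2) .
  show "dim_col (fst (\<Phi> ! k)) \<le> maxnorm (ann_D \<Phi>)"
  proof (cases k)
    case 0
    then show ?thesis using ann_I_le_maxnorm[of \<Phi>] is_ANN_not_Nil[OF assms(1)] by (simp add: ann_I_def hd_conv_nth)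
  next
    case (Suc j)
    then show ?thesis using assms row[of j] unfolding is_ANN_def by simp
  qed
qed

lemma ann_P_le:
  assumes "is_ANN \<Phi>"
  shows "ann_P \<Phi> \<le> 2 * length \<Phi> * maxnorm (ann_D \<Phi>) ^ 2"
proof -
  let ?w = "maxnorm (ann_D \<Phi>)"
  have "dim_row (fst (\<Phi> ! k)) * (dim_col (fst (\<Phi> ! k)) + 1) \<le> 2 * ?w ^ 2" if "k < length \<Phi>" for k
  proof -
    have "dim_row (fst (\<Phi> ! k)) * (dim_col (fst (\<Phi> ! k)) + 1) \<le> ?w * (?w + ?w)"
      using layer_dims_le_maxnorm[OF assms that] one_le_maxnorm_ann_D[OF assms] by (intro mult_le_mono) auto
    then show ?thesis by (simp add: power2_eq_square algebra_simps)
  qed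
  then have "ann_P \<Phi> \<le> (\<Sum>k<length \<Phi>. 2 * ?w ^ 2)" unfolding ann_P_def by (intro sum_mono) auto
  then show ?thesis by simp
qed

section \<open>The networks of the MLP recursion\<close>

lemma power_width_recursion:
  fixes M b :: nat
  shows "M ^ n * b + 2 * (\<Sum>i<n. M ^ (n - i) * (b * (3 * M) ^ i)) = b * (3 * M) ^ n"
proof (induction n)
  case (Suc n)
  have "(\<Sum>i<Suc n. M ^ (Suc n - i) * (b * (3 * M) ^ i))
      = M * (\<Sum>i<n. M ^ (n - i) * (b * (3 * M) ^ i)) + M * (b * (3 * M) ^ n)"
    by (simp add: sum_distrib_left Suc_diff_le algebra_simps)
  then show ?case using arg_cong[OF Suc.IH, of "(*) M"] by (simp add: algebra_simps)
qed simp

lemma U_rec_regroup: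
  fixes g :: "nat \<Rightarrow> real" and f1 f2 :: "nat \<Rightarrow> nat \<Rightarrow> real" and K T t :: real
  assumes "1 \<le> n"
  shows "indN n / K ^ n * (\<Sum>k = 1..N. g k) + (\<Sum>i<n. (T - t) / K ^ (n - i) * (\<Sum>k = 1..N' i. f1 i k - indN i * f2 i k))
     = 1 / K ^ n * (\<Sum>k = 1..N. g k) + ((\<Sum>i<n. (T - t) / K ^ (n - i) * (\<Sum>k = 1..N' i. f1 i k))
       + (\<Sum>i<n. (t - T) * indN i / K ^ (n - i) * (\<Sum>k = 1..N' i. f2 i k)))"
proof -
  have "(T - t) / K ^ (n - i) * (\<Sum>k = 1..N' i. f1 i k - indN i * f2 i k)
      = (T - t) / K ^ (n - i) * (\<Sum>k = 1..N' i. f1 i k) + (t - T) * indN i / K ^ (n - i) * (\<Sum>k = 1..N' i. f2 i k)" for i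
    by (simp add: sum_subtractf sum_distrib_left[symmetric] algebra_simps diff_divide_distrib)
  then show ?thesis using assms by (simp add: indN_def sum.distrib)
qed

lemma sum_list_map_upt_Suc: "(\<Sum>k\<leftarrow>[1..<N + 1]. f k) = (\<Sum>k = 1..N. f k)"
  by (simp add: sum_set_upt_conv_sum_list_nat[symmetric] atLeastLessThanSuc_atLeastAtMost del: upt_Suc)

locale mlp_setting =
  fixes d M dd :: nat and T :: real and a :: "real \<Rightarrow> real"
    and J F G :: ann
    and Uc :: "int list \<Rightarrow> real \<Rightarrow> real"
    and W :: "int list \<Rightarrow> real \<Rightarrow> real vec"
    and U :: "int list \<Rightarrow> nat \<Rightarrow> real \<Rightarrow> real vec \<Rightarrow> real"
    and UU :: "int list \<Rightarrow> nat \<Rightarrow> real \<Rightarrow> ann"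
  assumes M_pos: "1 \<le> M" and dd_pos: "1 \<le> dd" and continuous_a: "continuous_on UNIV a"
    and J_is_ANN: "is_ANN J" and J_dims: "ann_D J = [1, dd, 1]" and J_realizes_id: "\<forall>x \<in> carrier_vec 1. realize a J x = x"
    and F_is_ANN: "is_ANN F" and F_in_C: "realization_in_C a F 1 1"
    and G_is_ANN: "is_ANN G" and G_in_C: "realization_in_C a G d 1"
    and Uc_range: "\<forall>\<theta> \<in> Theta. \<forall>t \<in> {0..T}. Uc \<theta> t \<in> {0..T}"
    and W_range: "\<forall>\<theta> \<in> Theta. \<forall>s \<in> {-T..T}. W \<theta> s \<in> carrier_vec d"
    and U_rec: "\<forall>\<theta> \<in> Theta. \<forall>n. \<forall>t \<in> {0..T}. \<forall>x \<in> carrier_vec d.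
        U \<theta> n t x =
          indN n / real M ^ n *
            (\<Sum>k = 1..M ^ n. realize a G (x + W (\<theta> @ [0, - int k]) (T - t)) $ 0)
          + (\<Sum>i<n. (T - t) / real M ^ (n - i) *
              (\<Sum>k = 1..M ^ (n - i).
                 realize a F (vec 1 (\<lambda>_. U (\<theta> @ [int i, int k]) i (Uc (\<theta> @ [int i, int k]) t)
                    (x + W (\<theta> @ [int i, int k]) (Uc (\<theta> @ [int i, int k]) t - t)))) $ 0
                 - indN i *
                   realize a F (vec 1 (\<lambda>_. U (\<theta> @ [- int i, int k]) (max (i - 1) 0)
                    (Uc (\<theta> @ [int i, int k]) t)
                    (x + W (\<theta> @ [int i, int k]) (Uc (\<theta> @ [int i, int k]) t - t)))) $ 0))"
    and UU_is_ANN: "\<forall>\<theta> \<in> Theta. \<forall>n. \<forall>t \<in> {0..T}. is_ANN (UU \<theta> n t)"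
    and UU_0: "\<forall>\<theta> \<in> Theta. \<forall>t \<in> {0..T}. UU \<theta> 0 t = ann_A (0\<^sub>m 1 d) (0\<^sub>v 1)"
    and UU_rec: "\<forall>\<theta> \<in> Theta. \<forall>n \<ge> 1. \<forall>t \<in> {0..T}.
        UU \<theta> n t = ann_boxplus J
          [ ann_sum (map (\<lambda>k. ann_scalar (1 / real M ^ n)
                (ann_comp G (ann_A (1\<^sub>m d) (W (\<theta> @ [0, - int k]) (T - t)))))
              [1..<M ^ n + 1]),
            ann_boxplus J (map (\<lambda>i. ann_scalar ((T - t) / real M ^ (n - i))
                (ann_boxplus J (map (\<lambda>k.
                   ann_comp (ann_comp F (UU (\<theta> @ [int i, int k]) i (Uc (\<theta> @ [int i, int k]) t)))
                     (ann_A (1\<^sub>m d) (W (\<theta> @ [int i, int k]) (Uc (\<theta> @ [int i, int k]) t - t))))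
                 [1..<M ^ (n - i) + 1])))
              [0..<n]),
            ann_boxplus J (map (\<lambda>i. ann_scalar ((t - T) * indN i / real M ^ (n - i))
                (ann_boxplus J (map (\<lambda>k.
                   ann_comp (ann_comp F (UU (\<theta> @ [- int i, int k]) (max (i - 1) 0)
                               (Uc (\<theta> @ [int i, int k]) t)))
                     (ann_A (1\<^sub>m d) (W (\<theta> @ [int i, int k]) (Uc (\<theta> @ [int i, int k]) t - t))))
                 [1..<M ^ (n - i) + 1])))
              [0..<n]) ]"
begin

sublocale identity_ann J dd a
  using J_is_ANN J_dims J_realizes_id by unfold_locales auto

lemma F_dims: "ann_I F = 1" "ann_O F = 1" and G_dims: "ann_I G = d" "ann_O G = 1"
  using F_in_C G_in_C unfolding realization_in_C_def by auto

definition base_width :: nat where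
  "base_width = max dd (max (maxnorm (ann_D F)) (maxnorm (ann_D G)))"

definition depth_bound :: "nat \<Rightarrow> nat" where
  "depth_bound n = max dd (ann_L G) + n * ann_H F"

definition width_bound :: "nat \<Rightarrow> nat" where
  "width_bound n = base_width * (3 * M) ^ n"

lemma width_bound_mono: "i \<le> j \<Longrightarrow> width_bound i \<le> width_bound j"
  unfolding width_bound_def using M_pos by (intro mult_le_mono2 power_increasing) auto

lemma base_width_le_width_bound: "base_width \<le> width_bound i"
  using width_bound_mono[of 0 i] by (simp add: width_bound_def)

lemma dd_le_width_bound: "dd \<le> width_bound i"
  using base_width_le_width_bound[of i] unfolding base_width_def by linarith

lemma Theta_append: "\<theta> \<in> Theta \<Longrightarrow> \<theta> @ xs \<in> Theta"
  unfolding Theta_def by simp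

lemma Uc_in_range: "\<theta> \<in> Theta \<Longrightarrow> t \<in> {0..T} \<Longrightarrow> Uc \<theta> t \<in> {0..T}"
  using Uc_range by blast

lemma W_in_carrier: "\<theta> \<in> Theta \<Longrightarrow> s \<in> {-T..T} \<Longrightarrow> W \<theta> s \<in> carrier_vec d"
  using W_range by blast

definition level_ok :: "nat \<Rightarrow> int list \<Rightarrow> real \<Rightarrow> bool" where
  "level_ok n \<theta> t \<longleftrightarrow> ann_I (UU \<theta> n t) = d \<and> ann_O (UU \<theta> n t) = 1 \<and> length (UU \<theta> n t) \<le> depth_bound n
     \<and> maxnorm (ann_D (UU \<theta> n t)) \<le> width_bound n
     \<and> (\<forall>x \<in> carrier_vec d. U \<theta> n t x = realize a (UU \<theta> n t) x $ 0)"

definition level_valid :: "nat \<Rightarrow> bool" where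
  "level_valid n \<longleftrightarrow> (\<forall>\<theta>\<in>Theta. \<forall>t\<in>{0..T}. level_ok n \<theta> t)"

definition dims_uniform :: "nat \<Rightarrow> bool" where
  "dims_uniform n \<longleftrightarrow> (\<forall>\<theta>1\<in>Theta. \<forall>\<theta>2\<in>Theta. \<forall>t1\<in>{0..T}. \<forall>t2\<in>{0..T}. ann_D (UU \<theta>1 n t1) = ann_D (UU \<theta>2 n t2))"

definition leaf :: "int list \<Rightarrow> nat \<Rightarrow> real \<Rightarrow> real vec \<Rightarrow> ann" where
  "leaf \<theta> j s v = ann_comp (ann_comp F (UU \<theta> j s)) (ann_A (1\<^sub>m d) v)"

lemma leaf_simps:
  assumes "\<theta> \<in> Theta" "s \<in> {0..T}" "level_ok j \<theta> s" "v \<in> carrier_vec d"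
  shows "is_ANN (leaf \<theta> j s v)" "ann_I (leaf \<theta> j s v) = d" "ann_O (leaf \<theta> j s v) = 1"
    "ann_D (leaf \<theta> j s v) = butlast (ann_D (UU \<theta> j s)) @ tl (ann_D F)"
    "length (leaf \<theta> j s v) \<le> depth_bound (Suc j)"
proof -
  have UU: "is_ANN (UU \<theta> j s)" "ann_I (UU \<theta> j s) = d" "ann_O (UU \<theta> j s) = 1" "length (UU \<theta> j s) \<le> depth_bound j"
    using assms UU_is_ANN unfolding level_ok_def by auto
  then have FU: "is_ANN (ann_comp F (UU \<theta> j s))" "ann_I (ann_comp F (UU \<theta> j s)) = d"
    using F_is_ANN F_dims by (simp_all add: is_ANN_ann_comp is_ANN_not_Nil)
  then show "is_ANN (leaf \<theta> j s v)" using assms(4) unfolding leaf_def by (rule is_ANN_ann_comp_shift)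
  note shift = ann_comp_shift_simps[OF ann_comp_not_Nil FU(2)]
  show "ann_I (leaf \<theta> j s v) = d" "ann_O (leaf \<theta> j s v) = 1"
    "ann_D (leaf \<theta> j s v) = butlast (ann_D (UU \<theta> j s)) @ tl (ann_D F)"
    unfolding leaf_def shift using F_is_ANN UU F_dims by (simp_all add: is_ANN_not_Nil ann_D_ann_comp)
  show "length (leaf \<theta> j s v) \<le> depth_bound (Suc j)"
    unfolding leaf_def shift using F_is_ANN UU is_ANN_not_Nil[OF F_is_ANN]
    by (simp add: is_ANN_not_Nil depth_bound_def ann_H_def)
qed

lemma maxnorm_leaf_le:
  assumes "\<theta> \<in> Theta" "s \<in> {0..T}" "level_ok j \<theta> s" "v \<in> carrier_vec d"
  shows "maxnorm (ann_D (leaf \<theta> j s v)) \<le> width_bound j"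
proof -
  have "y \<le> width_bound j" if "y \<in> set (ann_D (UU \<theta> j s)) \<union> set (ann_D F)" for y
    using that assms(3) maxnorm_ge[of y] base_width_le_width_bound[of j]
    unfolding level_ok_def base_width_def by fastforce
  moreover have "set (ann_D (leaf \<theta> j s v)) \<subseteq> set (ann_D (UU \<theta> j s)) \<union> set (ann_D F)"
    unfolding leaf_simps(4)[OF assms] by (rule set_butlast_append_tl)
  ultimately show ?thesis by (auto simp: maxnorm_le_iff)
qed

lemma realize_leaf:
  assumes "\<theta> \<in> Theta" "s \<in> {0..T}" "level_ok j \<theta> s" "v \<in> carrier_vec d" "x \<in> carrier_vec d"
  shows "realize a (leaf \<theta> j s v) x $ 0 = realize a F (vec 1 (\<lambda>_. U \<theta> j s (x + v))) $ 0"
proof -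
  have UU: "is_ANN (UU \<theta> j s)" "ann_I (UU \<theta> j s) = d" "ann_O (UU \<theta> j s) = 1"
    and U: "U \<theta> j s (x + v) = realize a (UU \<theta> j s) (x + v) $ 0"
    using assms UU_is_ANN unfolding level_ok_def by auto
  have xv: "x + v \<in> carrier_vec d" using assms(4,5) by simp
  have "realize a (UU \<theta> j s) (x + v) \<in> carrier_vec 1" using realize_carrier[OF UU(1)] UU xv by simp
  then have "realize a (UU \<theta> j s) (x + v) = vec 1 (\<lambda>_. U \<theta> j s (x + v))" unfolding U by (auto intro!: eq_vecI)
  moreover have FU: "is_ANN (ann_comp F (UU \<theta> j s))" "ann_I (ann_comp F (UU \<theta> j s)) = d"
    using UU F_is_ANN F_dims by (simp_all add: is_ANN_ann_comp is_ANN_not_Nil)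
  then have "realize a (leaf \<theta> j s v) x = realize a F (realize a (UU \<theta> j s) (x + v))"
    using realize_ann_comp_shift[OF FU assms(4,5)] realize_ann_comp[OF F_is_ANN UU(1)] UU F_dims xv
    unfolding leaf_def by simp
  ultimately show ?thesis by simp
qed

lemma leaf_args:
  assumes "\<theta> \<in> Theta" "t \<in> {0..T}"
  shows "Uc (\<theta> @ [int i, int k]) t \<in> {0..T}"
    "W (\<theta> @ [int i, int k]) (Uc (\<theta> @ [int i, int k]) t - t) \<in> carrier_vec d"
proof -
  show s: "Uc (\<theta> @ [int i, int k]) t \<in> {0..T}" using Uc_in_range Theta_append assms by blast
  then show "W (\<theta> @ [int i, int k]) (Uc (\<theta> @ [int i, int k]) t - t) \<in> carrier_vec d"
    using assms by (intro W_in_carrier Theta_append) auto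
qed

definition F_leaves :: "int \<Rightarrow> nat \<Rightarrow> int list \<Rightarrow> real \<Rightarrow> nat \<Rightarrow> nat \<Rightarrow> ann list" where
  "F_leaves s j \<theta> t i N = map (\<lambda>k.
     leaf (\<theta> @ [s, int k]) j (Uc (\<theta> @ [int i, int k]) t) (W (\<theta> @ [int i, int k]) (Uc (\<theta> @ [int i, int k]) t - t)))
     [1..<N + 1]"

definition F_level :: "real \<Rightarrow> int \<Rightarrow> nat \<Rightarrow> int list \<Rightarrow> real \<Rightarrow> nat \<Rightarrow> nat \<Rightarrow> ann" where
  "F_level c s j \<theta> t i N = ann_scalar c (ann_boxplus J (F_leaves s j \<theta> t i N))"

context
  fixes c :: real and s :: int and j :: nat and \<theta> :: "int list" and t :: real and i N :: nat
  assumes \<theta>: "\<theta> \<in> Theta" and t: "t \<in> {0..T}" and N: "1 \<le> N"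
    and level: "level_valid j"
begin

lemma F_leaves_hyps:
  "\<theta> @ [s, int k] \<in> Theta" "Uc (\<theta> @ [int i, int k]) t \<in> {0..T}"
  "level_ok j (\<theta> @ [s, int k]) (Uc (\<theta> @ [int i, int k]) t)"
  "W (\<theta> @ [int i, int k]) (Uc (\<theta> @ [int i, int k]) t - t) \<in> carrier_vec d"
  using Theta_append[OF \<theta>] leaf_args[OF \<theta> t] level unfolding level_valid_def by blast+

lemma F_leaves_ok: "\<Phi> \<in> set (F_leaves s j \<theta> t i N) \<Longrightarrow> is_ANN \<Phi> \<and> ann_I \<Phi> = d \<and> ann_O \<Phi> = 1"
  using leaf_simps[OF F_leaves_hyps] unfolding F_leaves_def by auto

lemma F_leaves_not_Nil: "(F_leaves s j \<theta> t i N) \<noteq> []"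
  using N unfolding F_leaves_def by simp

lemma F_level_simps:
  "is_ANN (F_level c s j \<theta> t i N)" "ann_I (F_level c s j \<theta> t i N) = d" "ann_O (F_level c s j \<theta> t i N) = 1"
  "length (F_level c s j \<theta> t i N) \<le> depth_bound (Suc j)"
  "maxnorm (ann_D (F_level c s j \<theta> t i N)) \<le> N * width_bound j"
proof -
  note box = ann_boxplus_simps[OF F_leaves_not_Nil F_leaves_ok]
  show "is_ANN (F_level c s j \<theta> t i N)" "ann_I (F_level c s j \<theta> t i N) = d" "ann_O (F_level c s j \<theta> t i N) = 1"
    unfolding F_level_def using box by (simp_all add: is_ANN_ann_scalar is_ANN_not_Nil)
  have "Max (set (map ann_L (F_leaves s j \<theta> t i N))) \<le> depth_bound (Suc j)"
    using F_leaves_not_Nil unfolding F_leaves_def by (subst Max_le_iff) (auto simp: ann_L_def leaf_simps(5)[OF F_leaves_hyps] simp del: upt_Suc)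
  then show "length (F_level c s j \<theta> t i N) \<le> depth_bound (Suc j)"
    unfolding F_level_def using box by (simp add: is_ANN_not_Nil del: upt_Suc)
  have "maxnorm (ann_D (ann_boxplus J (F_leaves s j \<theta> t i N))) \<le> (\<Sum>\<Phi>\<leftarrow>(F_leaves s j \<theta> t i N). max (maxnorm (ann_D \<Phi>)) dd)"
    by (rule maxnorm_ann_D_ann_boxplus_le[OF F_leaves_not_Nil F_leaves_ok])
  also have "\<dots> \<le> (\<Sum>\<Phi>\<leftarrow>(F_leaves s j \<theta> t i N). width_bound j)"
    using maxnorm_leaf_le[OF F_leaves_hyps] dd_le_width_bound unfolding F_leaves_def by (intro sum_list_mono) auto
  also have "\<dots> = N * width_bound j" by (simp add: F_leaves_def sum_list_triv o_def del: upt_Suc)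
  finally show "maxnorm (ann_D (F_level c s j \<theta> t i N)) \<le> N * width_bound j"
    unfolding F_level_def using box by (simp add: is_ANN_not_Nil)
qed

lemma realize_F_level:
  assumes "x \<in> carrier_vec d"
  shows "realize a (F_level c s j \<theta> t i N) x $ 0 = c * (\<Sum>k = 1..N.
    realize a F (vec 1 (\<lambda>_. U (\<theta> @ [s, int k]) j (Uc (\<theta> @ [int i, int k]) t)
      (x + W (\<theta> @ [int i, int k]) (Uc (\<theta> @ [int i, int k]) t - t)))) $ 0)"
proof -
  note box = ann_boxplus_simps[OF F_leaves_not_Nil F_leaves_ok]
  have "realize a (F_level c s j \<theta> t i N) x $ 0 = c * realize a (ann_boxplus J (F_leaves s j \<theta> t i N)) x $ 0"
    unfolding F_level_def using assms box by (simp add: realize_ann_scalar)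
  also have "realize a (ann_boxplus J (F_leaves s j \<theta> t i N)) x $ 0 = (\<Sum>\<Phi>\<leftarrow>(F_leaves s j \<theta> t i N). realize a \<Phi> x $ 0)"
    by (rule realize_ann_boxplus[OF F_leaves_not_Nil F_leaves_ok assms])
  also have "\<dots> = (\<Sum>k = 1..N. realize a (leaf (\<theta> @ [s, int k]) j (Uc (\<theta> @ [int i, int k]) t)
      (W (\<theta> @ [int i, int k]) (Uc (\<theta> @ [int i, int k]) t - t))) x $ 0)"
    unfolding F_leaves_def map_map o_def by (rule sum_list_map_upt_Suc)
  finally show ?thesis using realize_leaf[OF F_leaves_hyps assms] by simp
qed

end

lemma ann_D_F_level_cong:
  assumes "\<theta>1 \<in> Theta" "t1 \<in> {0..T}" "\<theta>2 \<in> Theta" "t2 \<in> {0..T}" "1 \<le> N"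
    and level: "level_valid j" and "dims_uniform j"
  shows "ann_D (F_level c1 s j \<theta>1 t1 i N) = ann_D (F_level c2 s j \<theta>2 t2 i N)"
proof -
  have D: "map ann_D (F_leaves s j \<theta>1 t1 i N) = map ann_D (F_leaves s j \<theta>2 t2 i N)"
  proof -
    have "ann_D (leaf (\<theta>1 @ [s, int k]) j (Uc (\<theta>1 @ [int i, int k]) t1) (W (\<theta>1 @ [int i, int k]) (Uc (\<theta>1 @ [int i, int k]) t1 - t1)))
        = ann_D (leaf (\<theta>2 @ [s, int k]) j (Uc (\<theta>2 @ [int i, int k]) t2) (W (\<theta>2 @ [int i, int k]) (Uc (\<theta>2 @ [int i, int k]) t2 - t2)))"
      for k
      using leaf_simps(4)[OF F_leaves_hyps[OF assms(1,2,5) level]] leaf_simps(4)[OF F_leaves_hyps[OF assms(3,4,5) level]]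
        F_leaves_hyps(1,2)[OF assms(1,2,5) level] F_leaves_hyps(1,2)[OF assms(3,4,5) level] \<open>dims_uniform j\<close>
      unfolding dims_uniform_def by metis
    then show ?thesis using assms(1-4) unfolding F_leaves_def by simp
  qed
  have "ann_D (ann_boxplus J (F_leaves s j \<theta>1 t1 i N)) = ann_D (ann_boxplus J (F_leaves s j \<theta>2 t2 i N))"
  proof (rule ann_D_ann_boxplus_cong[OF _ _ _ D])
    show "F_leaves s j \<theta>1 t1 i N \<noteq> []" by (rule F_leaves_not_Nil[OF assms(1,2,5) level])
    show "\<And>\<Phi>. \<Phi> \<in> set (F_leaves s j \<theta>1 t1 i N) \<Longrightarrow> is_ANN \<Phi> \<and> ann_I \<Phi> = d \<and> ann_O \<Phi> = 1"
      by (rule F_leaves_ok[OF assms(1,2,5) level])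
    show "\<And>\<Psi>. \<Psi> \<in> set (F_leaves s j \<theta>2 t2 i N) \<Longrightarrow> is_ANN \<Psi> \<and> ann_I \<Psi> = d \<and> ann_O \<Psi> = 1"
      by (rule F_leaves_ok[OF assms(3,4,5) level])
  qed
  then show ?thesis by (simp add: F_level_def)
qed

lemma one_le_M_power: "1 \<le> M ^ k"
  using M_pos by simp

lemma depth_bound_mono: "i \<le> j \<Longrightarrow> depth_bound i \<le> depth_bound j"
  unfolding depth_bound_def by (simp add: mult_le_mono1)

text \<open>The second and third summand in the recursion for UU differ only in the coefficient c i,
  the first appended index \<sigma> i (i or -i) and the level lev i (i or max (i - 1) 0) of the inner
  networks, so F_part treats both at once.\<close>

definition F_part :: "(nat \<Rightarrow> real) \<Rightarrow> (nat \<Rightarrow> int) \<Rightarrow> (nat \<Rightarrow> nat) \<Rightarrow> int list \<Rightarrow> real \<Rightarrow> nat \<Rightarrow> ann" where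
  "F_part c \<sigma> lev \<theta> t n = ann_boxplus J (map (\<lambda>i. F_level (c i) (\<sigma> i) (lev i) \<theta> t i (M ^ (n - i))) [0..<n])"

context
  fixes c :: "nat \<Rightarrow> real" and \<sigma> :: "nat \<Rightarrow> int" and lev :: "nat \<Rightarrow> nat" and \<theta> :: "int list" and t :: real and n :: nat
  assumes \<theta>: "\<theta> \<in> Theta" and t: "t \<in> {0..T}" and n: "1 \<le> n" and lev: "\<And>i. i < n \<Longrightarrow> lev i \<le> i"
    and levels: "\<And>i. i < n \<Longrightarrow> level_valid (lev i)"
begin

lemma F_part_level_simps:
  assumes "i < n"
  shows "is_ANN (F_level (c i) (\<sigma> i) (lev i) \<theta> t i (M ^ (n - i)))"
    "ann_I (F_level (c i) (\<sigma> i) (lev i) \<theta> t i (M ^ (n - i))) = d"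
    "ann_O (F_level (c i) (\<sigma> i) (lev i) \<theta> t i (M ^ (n - i))) = 1"
    "length (F_level (c i) (\<sigma> i) (lev i) \<theta> t i (M ^ (n - i))) \<le> depth_bound n"
    "max (maxnorm (ann_D (F_level (c i) (\<sigma> i) (lev i) \<theta> t i (M ^ (n - i))))) dd \<le> M ^ (n - i) * width_bound i"
    "x \<in> carrier_vec d \<Longrightarrow> realize a (F_level (c i) (\<sigma> i) (lev i) \<theta> t i (M ^ (n - i))) x $ 0 = c i * (\<Sum>k = 1..M ^ (n - i).
       realize a F (vec 1 (\<lambda>_. U (\<theta> @ [\<sigma> i, int k]) (lev i) (Uc (\<theta> @ [int i, int k]) t)
         (x + W (\<theta> @ [int i, int k]) (Uc (\<theta> @ [int i, int k]) t - t)))) $ 0)"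
proof -
  note lv = levels[OF assms]
  note F = F_level_simps[OF \<theta> t one_le_M_power lv]
  show "is_ANN (F_level (c i) (\<sigma> i) (lev i) \<theta> t i (M ^ (n - i)))"
    "ann_I (F_level (c i) (\<sigma> i) (lev i) \<theta> t i (M ^ (n - i))) = d"
    "ann_O (F_level (c i) (\<sigma> i) (lev i) \<theta> t i (M ^ (n - i))) = 1" using F(1-3) .
  show "length (F_level (c i) (\<sigma> i) (lev i) \<theta> t i (M ^ (n - i))) \<le> depth_bound n"
    by (rule order_trans[OF F(4) depth_bound_mono]) (use lev[OF assms] assms in simp)
  have "maxnorm (ann_D (F_level (c i) (\<sigma> i) (lev i) \<theta> t i (M ^ (n - i)))) \<le> M ^ (n - i) * width_bound i"
    using F(5) width_bound_mono[OF lev[OF assms]] by (meson le_trans mult_le_mono2)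
  moreover have "dd \<le> M ^ (n - i) * width_bound i"
    using dd_le_width_bound[of i] one_le_M_power[of "n - i"] by (metis le_trans mult_1 mult_le_mono1)
  ultimately show "max (maxnorm (ann_D (F_level (c i) (\<sigma> i) (lev i) \<theta> t i (M ^ (n - i))))) dd
      \<le> M ^ (n - i) * width_bound i" by simp
  show "x \<in> carrier_vec d \<Longrightarrow> realize a (F_level (c i) (\<sigma> i) (lev i) \<theta> t i (M ^ (n - i))) x $ 0 = c i * (\<Sum>k = 1..M ^ (n - i).
       realize a F (vec 1 (\<lambda>_. U (\<theta> @ [\<sigma> i, int k]) (lev i) (Uc (\<theta> @ [int i, int k]) t)
         (x + W (\<theta> @ [int i, int k]) (Uc (\<theta> @ [int i, int k]) t - t)))) $ 0)"
    by (rule realize_F_level[OF \<theta> t one_le_M_power lv])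
qed

lemma F_part_levels_ok:
  "\<Phi> \<in> set (map (\<lambda>i. F_level (c i) (\<sigma> i) (lev i) \<theta> t i (M ^ (n - i))) [0..<n]) \<Longrightarrow> is_ANN \<Phi> \<and> ann_I \<Phi> = d \<and> ann_O \<Phi> = 1"
  using F_part_level_simps(1-3) by auto

lemma F_part_levels_not_Nil: "map (\<lambda>i. F_level (c i) (\<sigma> i) (lev i) \<theta> t i (M ^ (n - i))) [0..<n] \<noteq> []"
  using n by simp

lemma F_part_simps:
  "is_ANN (F_part c \<sigma> lev \<theta> t n)" "ann_I (F_part c \<sigma> lev \<theta> t n) = d" "ann_O (F_part c \<sigma> lev \<theta> t n) = 1"
  "length (F_part c \<sigma> lev \<theta> t n) \<le> depth_bound n"
  "maxnorm (ann_D (F_part c \<sigma> lev \<theta> t n)) \<le> (\<Sum>i<n. M ^ (n - i) * width_bound i)"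
proof -
  note box = ann_boxplus_simps[OF F_part_levels_not_Nil F_part_levels_ok]
  show "is_ANN (F_part c \<sigma> lev \<theta> t n)" "ann_I (F_part c \<sigma> lev \<theta> t n) = d" "ann_O (F_part c \<sigma> lev \<theta> t n) = 1"
    unfolding F_part_def using box by simp_all
  show "length (F_part c \<sigma> lev \<theta> t n) \<le> depth_bound n"
    unfolding F_part_def using box(4) n F_part_level_simps(4) by (simp add: Max_le_iff ann_L_def)
  have "maxnorm (ann_D (F_part c \<sigma> lev \<theta> t n))
      \<le> (\<Sum>i\<leftarrow>[0..<n]. max (maxnorm (ann_D (F_level (c i) (\<sigma> i) (lev i) \<theta> t i (M ^ (n - i))))) dd)"
    unfolding F_part_def using maxnorm_ann_D_ann_boxplus_le[OF F_part_levels_not_Nil F_part_levels_ok]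
    by (simp add: o_def)
  also have "\<dots> \<le> (\<Sum>i\<leftarrow>[0..<n]. M ^ (n - i) * width_bound i)"
    using F_part_level_simps(5) by (intro sum_list_mono) simp
  finally show "maxnorm (ann_D (F_part c \<sigma> lev \<theta> t n)) \<le> (\<Sum>i<n. M ^ (n - i) * width_bound i)"
    by (simp add: sum_list_map_upt)
qed

lemma realize_F_part:
  assumes "x \<in> carrier_vec d"
  shows "realize a (F_part c \<sigma> lev \<theta> t n) x $ 0 = (\<Sum>i<n. c i * (\<Sum>k = 1..M ^ (n - i).
    realize a F (vec 1 (\<lambda>_. U (\<theta> @ [\<sigma> i, int k]) (lev i) (Uc (\<theta> @ [int i, int k]) t)
      (x + W (\<theta> @ [int i, int k]) (Uc (\<theta> @ [int i, int k]) t - t)))) $ 0))"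
proof -
  have "realize a (F_part c \<sigma> lev \<theta> t n) x $ 0
      = (\<Sum>i<n. realize a (F_level (c i) (\<sigma> i) (lev i) \<theta> t i (M ^ (n - i))) x $ 0)"
    using realize_ann_boxplus[OF F_part_levels_not_Nil F_part_levels_ok assms]
    by (simp add: F_part_def o_def sum_list_map_upt)
  also have "\<dots> = (\<Sum>i<n. c i * (\<Sum>k = 1..M ^ (n - i).
    realize a F (vec 1 (\<lambda>_. U (\<theta> @ [\<sigma> i, int k]) (lev i) (Uc (\<theta> @ [int i, int k]) t)
      (x + W (\<theta> @ [int i, int k]) (Uc (\<theta> @ [int i, int k]) t - t)))) $ 0))"
    by (rule sum.cong[OF refl]) (simp add: F_part_level_simps(6)[OF _ assms])
  finally show ?thesis .
qed

end

lemma ann_D_F_part_cong: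
  assumes "\<theta>1 \<in> Theta" "t1 \<in> {0..T}" "\<theta>2 \<in> Theta" "t2 \<in> {0..T}" "1 \<le> n" "\<And>i. i < n \<Longrightarrow> lev i \<le> i"
    and levels: "\<And>i. i < n \<Longrightarrow> level_valid (lev i)"
    and "\<And>i. i < n \<Longrightarrow> dims_uniform (lev i)"
  shows "ann_D (F_part c1 \<sigma> lev \<theta>1 t1 n) = ann_D (F_part c2 \<sigma> lev \<theta>2 t2 n)"
  unfolding F_part_def
proof (rule ann_D_ann_boxplus_cong)
  show "map ann_D (map (\<lambda>i. F_level (c1 i) (\<sigma> i) (lev i) \<theta>1 t1 i (M ^ (n - i))) [0..<n])
      = map ann_D (map (\<lambda>i. F_level (c2 i) (\<sigma> i) (lev i) \<theta>2 t2 i (M ^ (n - i))) [0..<n])"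
    using ann_D_F_level_cong[OF assms(1-4) one_le_M_power levels] assms(8) by simp
qed (use F_part_levels_not_Nil[OF assms(1,2,5,6) levels] F_part_levels_ok[OF assms(1,2,5,6) levels]
      F_part_levels_ok[OF assms(3,4,5,6) levels] in auto)

definition G_term :: "int list \<Rightarrow> real \<Rightarrow> nat \<Rightarrow> nat \<Rightarrow> ann" where
  "G_term \<theta> t n k = ann_scalar (1 / real M ^ n) (ann_comp G (ann_A (1\<^sub>m d) (W (\<theta> @ [0, - int k]) (T - t))))"

definition G_part :: "int list \<Rightarrow> real \<Rightarrow> nat \<Rightarrow> ann" where
  "G_part \<theta> t n = ann_sum (map (G_term \<theta> t n) [1..<M ^ n + 1])"

lemma G_term_simps:
  assumes "\<theta> \<in> Theta" "t \<in> {0..T}"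
  shows "is_ANN (G_term \<theta> t n k)" "ann_I (G_term \<theta> t n k) = d" "ann_O (G_term \<theta> t n k) = 1"
    "length (G_term \<theta> t n k) = length G" "ann_D (G_term \<theta> t n k) = ann_D G"
    "x \<in> carrier_vec d \<Longrightarrow>
      realize a (G_term \<theta> t n k) x $ 0 = 1 / real M ^ n * realize a G (x + W (\<theta> @ [0, - int k]) (T - t)) $ 0"
proof -
  have v: "W (\<theta> @ [0, - int k]) (T - t) \<in> carrier_vec d"
    using assms by (intro W_in_carrier Theta_append) auto
  note shift = ann_comp_shift_simps[OF is_ANN_not_Nil[OF G_is_ANN] G_dims(1)]
  have G': "is_ANN (ann_comp G (ann_A (1\<^sub>m d) (W (\<theta> @ [0, - int k]) (T - t))))"
    by (rule is_ANN_ann_comp_shift[OF G_is_ANN G_dims(1) v])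
  then show "is_ANN (G_term \<theta> t n k)" unfolding G_term_def by (rule is_ANN_ann_scalar)
  show "ann_I (G_term \<theta> t n k) = d" "ann_O (G_term \<theta> t n k) = 1"
    "length (G_term \<theta> t n k) = length G" "ann_D (G_term \<theta> t n k) = ann_D G"
    unfolding G_term_def using shift G_dims by simp_all
  show "x \<in> carrier_vec d \<Longrightarrow>
      realize a (G_term \<theta> t n k) x $ 0 = 1 / real M ^ n * realize a G (x + W (\<theta> @ [0, - int k]) (T - t)) $ 0"
    unfolding G_term_def using G' shift G_dims
    by (simp add: realize_ann_scalar realize_ann_comp_shift[OF G_is_ANN G_dims(1) v])
qed

lemma G_part_summable:
  assumes "\<theta> \<in> Theta" "t \<in> {0..T}"
  shows "summable_family (map (G_term \<theta> t n) [1..<M ^ n + 1]) (length G) d 1"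
  using G_term_simps[OF assms] one_le_M_power[of n] M_pos by unfold_locales (auto simp del: upt_Suc)

lemma G_part_simps:
  assumes "\<theta> \<in> Theta" "t \<in> {0..T}"
  shows "is_ANN (G_part \<theta> t n)" "ann_I (G_part \<theta> t n) = d" "ann_O (G_part \<theta> t n) = 1"
    "length (G_part \<theta> t n) = length G" "maxnorm (ann_D (G_part \<theta> t n)) \<le> M ^ n * base_width"
proof -
  interpret summable_family "map (G_term \<theta> t n) [1..<M ^ n + 1]" "length G" d 1
    by (rule G_part_summable[OF assms])
  show "is_ANN (G_part \<theta> t n)" "ann_I (G_part \<theta> t n) = d" "ann_O (G_part \<theta> t n) = 1"
    "length (G_part \<theta> t n) = length G"
    unfolding G_part_def using ann_sum_simps by simp_all
  have "maxnorm (ann_D (G_part \<theta> t n)) \<le> (\<Sum>q<M ^ n. maxnorm (ann_D G))"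
    using maxnorm_ann_D_ann_sum_le G_term_simps(5)[OF assms] unfolding G_part_def by (simp del: upt_Suc)
  then show "maxnorm (ann_D (G_part \<theta> t n)) \<le> M ^ n * base_width"
    unfolding base_width_def by (simp add: order_trans[OF _ mult_le_mono2])
qed

lemma realize_G_part:
  assumes "\<theta> \<in> Theta" "t \<in> {0..T}" "x \<in> carrier_vec d"
  shows "realize a (G_part \<theta> t n) x $ 0 = 1 / real M ^ n * (\<Sum>k = 1..M ^ n. realize a G (x + W (\<theta> @ [0, - int k]) (T - t)) $ 0)"
proof -
  interpret summable_family "map (G_term \<theta> t n) [1..<M ^ n + 1]" "length G" d 1
    by (rule G_part_summable[OF assms(1,2)])
  have "realize a (G_part \<theta> t n) x $ 0 = (\<Sum>q<M ^ n. realize a (G_term \<theta> t n (Suc q)) x $ 0)"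
    using realize_ann_sum[OF assms(3)] unfolding G_part_def by (simp del: upt_Suc)
  then show ?thesis using G_term_simps(6)[OF assms(1,2) assms(3)]
    by (simp add: sum.atLeast1_atMost_eq sum_distrib_left del: upt_Suc)
qed

lemma ann_D_G_part_cong:
  assumes "\<theta>1 \<in> Theta" "t1 \<in> {0..T}" "\<theta>2 \<in> Theta" "t2 \<in> {0..T}"
  shows "ann_D (G_part \<theta>1 t1 n) = ann_D (G_part \<theta>2 t2 n)"
  unfolding G_part_def
  by (rule ann_D_ann_sum_cong[OF G_part_summable[OF assms(1,2)] G_part_summable[OF assms(3,4)]])
    (simp add: G_term_simps(5)[OF assms(1,2)] G_term_simps(5)[OF assms(3,4)] del: upt_Suc)

lemma UU_eq_boxplus:
  assumes "\<theta> \<in> Theta" "1 \<le> n" "t \<in> {0..T}"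
  shows "UU \<theta> n t = ann_boxplus J [G_part \<theta> t n,
     F_part (\<lambda>i. (T - t) / real M ^ (n - i)) int (\<lambda>i. i) \<theta> t n,
     F_part (\<lambda>i. (t - T) * indN i / real M ^ (n - i)) (\<lambda>i. - int i) (\<lambda>i. max (i - 1) 0) \<theta> t n]"
  using UU_rec assms unfolding G_part_def G_term_def F_part_def F_level_def F_leaves_def leaf_def by simp

context
  fixes n :: nat
  assumes n: "1 \<le> n" and IH: "\<And>i. i < n \<Longrightarrow> level_valid i \<and> dims_uniform i"
begin

private abbreviation "parts \<theta> t \<equiv> [G_part \<theta> t n,
     F_part (\<lambda>i. (T - t) / real M ^ (n - i)) int (\<lambda>i. i) \<theta> t n,
     F_part (\<lambda>i. (t - T) * indN i / real M ^ (n - i)) (\<lambda>i. - int i) (\<lambda>i. max (i - 1) 0) \<theta> t n]"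

private lemma lev_le: "max (i - 1) 0 \<le> i" "i \<le> (i::nat)"
  by simp_all

private lemma IH_levels: "i < n \<Longrightarrow> level_valid (max (i - 1) 0)" "i < n \<Longrightarrow> level_valid i"
  using IH by (simp_all add: max_def)

private lemma IH_dims: "i < n \<Longrightarrow> dims_uniform (max (i - 1) 0)" "i < n \<Longrightarrow> dims_uniform i"
  using IH by (simp_all add: max_def)

private lemmas F_part_B = F_part_simps[OF _ _ n lev_le(2) IH_levels(2)]
  and F_part_C = F_part_simps[OF _ _ n lev_le(1) IH_levels(1)]

private lemma parts_not_Nil: "parts \<theta> t \<noteq> []"
  by simp

private lemma parts_ok:
  assumes "\<theta> \<in> Theta" "t \<in> {0..T}"
  shows "\<Phi> \<in> set (parts \<theta> t) \<Longrightarrow> is_ANN \<Phi> \<and> ann_I \<Phi> = d \<and> ann_O \<Phi> = 1"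
  using G_part_simps[OF assms] F_part_B[OF assms] F_part_C[OF assms] by auto

lemma length_UU_step:
  assumes "\<theta> \<in> Theta" "t \<in> {0..T}"
  shows "length (UU \<theta> n t) \<le> depth_bound n"
proof -
  have "length G \<le> depth_bound n" unfolding depth_bound_def ann_L_def by simp
  then show ?thesis unfolding UU_eq_boxplus[OF assms(1) n assms(2)]
    using ann_boxplus_simps(4)[OF parts_not_Nil[of \<theta> t] parts_ok[OF assms]]
      G_part_simps(4)[OF assms] F_part_B(4)[OF assms] F_part_C(4)[OF assms] by (simp add: ann_L_def)
qed

lemma maxnorm_UU_step:
  assumes "\<theta> \<in> Theta" "t \<in> {0..T}"
  shows "maxnorm (ann_D (UU \<theta> n t)) \<le> width_bound n"
proof -
  let ?S = "\<Sum>i<n. M ^ (n - i) * width_bound i"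
  have "dd \<le> base_width" by (simp add: base_width_def)
  also have "base_width \<le> M ^ n * base_width"
    using mult_le_mono1[OF one_le_M_power[of n], of base_width] by simp
  finally have "dd \<le> M ^ n * base_width" .
  moreover have "M ^ (n - 0) * width_bound 0 \<le> ?S"
    using n by (intro member_le_sum) auto
  then have "M ^ n * base_width \<le> ?S" by (simp add: width_bound_def)
  ultimately have "maxnorm (ann_D (UU \<theta> n t)) \<le> M ^ n * base_width + (?S + ?S)"
    unfolding UU_eq_boxplus[OF assms(1) n assms(2)]
    using order_trans[OF maxnorm_ann_D_ann_boxplus_le[OF parts_not_Nil[of \<theta> t] parts_ok[OF assms]]]
      G_part_simps(5)[OF assms] F_part_B(5)[OF assms] F_part_C(5)[OF assms]
    by (simp add: add_mono)
  also have "\<dots> = width_bound n" using power_width_recursion[of M n base_width] by (simp add: width_bound_def)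
  finally show ?thesis .
qed

lemma realize_UU_step:
  assumes "\<theta> \<in> Theta" "t \<in> {0..T}" "x \<in> carrier_vec d"
  shows "U \<theta> n t x = realize a (UU \<theta> n t) x $ 0"
proof -
  define g where "g k = realize a G (x + W (\<theta> @ [0, - int k]) (T - t)) $ 0" for k
  define f1 where "f1 i k = realize a F (vec 1 (\<lambda>_. U (\<theta> @ [int i, int k]) i (Uc (\<theta> @ [int i, int k]) t)
    (x + W (\<theta> @ [int i, int k]) (Uc (\<theta> @ [int i, int k]) t - t)))) $ 0" for i k
  define f2 where "f2 i k = realize a F (vec 1 (\<lambda>_. U (\<theta> @ [- int i, int k]) (max (i - 1) 0) (Uc (\<theta> @ [int i, int k]) t)
    (x + W (\<theta> @ [int i, int k]) (Uc (\<theta> @ [int i, int k]) t - t)))) $ 0" for i k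
  have "U \<theta> n t x = indN n / real M ^ n * (\<Sum>k = 1..M ^ n. g k)
      + (\<Sum>i<n. (T - t) / real M ^ (n - i) * (\<Sum>k = 1..M ^ (n - i). f1 i k - indN i * f2 i k))"
    using U_rec assms unfolding g_def f1_def f2_def by blast
  also have "\<dots> = 1 / real M ^ n * (\<Sum>k = 1..M ^ n. g k)
      + ((\<Sum>i<n. (T - t) / real M ^ (n - i) * (\<Sum>k = 1..M ^ (n - i). f1 i k))
      + (\<Sum>i<n. (t - T) * indN i / real M ^ (n - i) * (\<Sum>k = 1..M ^ (n - i). f2 i k)))"
    by (rule U_rec_regroup[OF n])
  also have "\<dots> = (\<Sum>\<Phi>\<leftarrow>parts \<theta> t. realize a \<Phi> x $ 0)"
    using realize_G_part[OF assms] realize_F_part[OF assms(1,2) n lev_le(2) IH_levels(2) assms(3)]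
      realize_F_part[OF assms(1,2) n lev_le(1) IH_levels(1) assms(3)]
    unfolding g_def f1_def f2_def by simp
  also have "\<dots> = realize a (UU \<theta> n t) x $ 0"
    unfolding UU_eq_boxplus[OF assms(1) n assms(2)]
    by (rule realize_ann_boxplus[OF parts_not_Nil[of \<theta> t] parts_ok[OF assms(1,2)] assms(3), symmetric])
  finally show ?thesis .
qed

lemma level_ok_step: "\<theta> \<in> Theta \<Longrightarrow> t \<in> {0..T} \<Longrightarrow> level_ok n \<theta> t"
  unfolding level_ok_def using length_UU_step maxnorm_UU_step realize_UU_step
    ann_boxplus_simps(2,3)[OF parts_not_Nil parts_ok] UU_eq_boxplus[OF _ n] by simp

lemma dims_uniform_step: "dims_uniform n"
  unfolding dims_uniform_def
proof (intro ballI)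
  fix \<theta>1 \<theta>2 t1 t2 assume th: "\<theta>1 \<in> Theta" "\<theta>2 \<in> Theta" and t: "t1 \<in> {0..T}" "t2 \<in> {0..T}"
  have D: "map ann_D (parts \<theta>1 t1) = map ann_D (parts \<theta>2 t2)"
    using ann_D_G_part_cong[OF th(1) t(1) th(2) t(2)]
      ann_D_F_part_cong[OF th(1) t(1) th(2) t(2) n lev_le(2) IH_levels(2) IH_dims(2)]
      ann_D_F_part_cong[OF th(1) t(1) th(2) t(2) n lev_le(1) IH_levels(1) IH_dims(1)] by simp
  show "ann_D (UU \<theta>1 n t1) = ann_D (UU \<theta>2 n t2)"
    unfolding UU_eq_boxplus[OF th(1) n t(1)] UU_eq_boxplus[OF th(2) n t(2)]
  proof (rule ann_D_ann_boxplus_cong[OF parts_not_Nil _ _ D])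
    show "\<And>\<Phi>. \<Phi> \<in> set (parts \<theta>1 t1) \<Longrightarrow> is_ANN \<Phi> \<and> ann_I \<Phi> = d \<and> ann_O \<Phi> = 1"
      "\<And>\<Psi>. \<Psi> \<in> set (parts \<theta>2 t2) \<Longrightarrow> is_ANN \<Psi> \<and> ann_I \<Psi> = d \<and> ann_O \<Psi> = 1"
      by (fact parts_ok[OF th(1) t(1)], fact parts_ok[OF th(2) t(2)])
  qed
qed

end

lemma level_base: "level_valid 0 \<and> dims_uniform 0"
proof -
  have "d \<le> base_width" using ann_I_le_maxnorm[of G] G_dims by (simp add: base_width_def)
  then have "maxnorm [d, 1] \<le> width_bound 0" using dd_pos by (simp add: maxnorm_def width_bound_def base_width_def)
  moreover have "1 \<le> depth_bound 0" using dd_pos by (simp add: depth_bound_def)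
  moreover have "U \<theta> 0 t x = 0" if "\<theta> \<in> Theta" "t \<in> {0..T}" "x \<in> carrier_vec d" for \<theta> t x
    using U_rec that by (simp add: indN_def)
  ultimately show ?thesis using UU_0 unfolding level_valid_def level_ok_def dims_uniform_def
    by (simp add: scalar_prod_def)
qed

lemma levels: "level_valid n \<and> dims_uniform n"
proof (induction n rule: less_induct)
  case (less n)
  show ?case
  proof (cases "n = 0")
    case False
    then have "1 \<le> n" by simp
    then show ?thesis using level_ok_step dims_uniform_step less unfolding level_valid_def by blast
  qed (simp add: level_base)
qed

lemma UU_dims_eq:
  "\<theta>1 \<in> Theta \<Longrightarrow> \<theta>2 \<in> Theta \<Longrightarrow> t1 \<in> {0..T} \<Longrightarrow> t2 \<in> {0..T} \<Longrightarrow> ann_D (UU \<theta>1 n t1) = ann_D (UU \<theta>2 n t2)"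
  using levels unfolding dims_uniform_def by blast

lemma UU_level_ok: "\<theta> \<in> Theta \<Longrightarrow> t \<in> {0..T} \<Longrightarrow> level_ok n \<theta> t"
  using levels unfolding level_valid_def by blast

lemma UU_realization_in_C: "\<theta> \<in> Theta \<Longrightarrow> t \<in> {0..T} \<Longrightarrow> realization_in_C a (UU \<theta> n t) d 1"
proof -
  assume "\<theta> \<in> Theta" "t \<in> {0..T}"
  then have UU: "is_ANN (UU \<theta> n t)" "ann_I (UU \<theta> n t) = d" "ann_O (UU \<theta> n t) = 1"
    using UU_is_ANN UU_level_ok unfolding level_ok_def by blast+
  then show ?thesis unfolding realization_in_C_def using in_C_realize[OF continuous_a UU(1)] by simp
qed

lemma UU_length_le: "\<theta> \<in> Theta \<Longrightarrow> t \<in> {0..T} \<Longrightarrow> ann_L (UU \<theta> n t) \<le> max dd (ann_L G) + n * ann_H F"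
  using UU_level_ok unfolding level_ok_def depth_bound_def ann_L_def by blast

lemma UU_maxnorm_le:
  "\<theta> \<in> Theta \<Longrightarrow> t \<in> {0..T} \<Longrightarrow>
    real (maxnorm (ann_D (UU \<theta> n t))) \<le> real (max dd (max (maxnorm (ann_D F)) (maxnorm (ann_D G)))) * (3 * real M) ^ n"
proof -
  assume "\<theta> \<in> Theta" "t \<in> {0..T}"
  then have "maxnorm (ann_D (UU \<theta> n t)) \<le> base_width * (3 * M) ^ n"
    using UU_level_ok unfolding level_ok_def width_bound_def by blast
  then have "real (maxnorm (ann_D (UU \<theta> n t))) \<le> real (base_width * (3 * M) ^ n)" by (simp only: of_nat_le_iff)
  then show ?thesis by (simp add: base_width_def)
qed

lemma UU_realizes_U: "\<theta> \<in> Theta \<Longrightarrow> t \<in> {0..T} \<Longrightarrow> x \<in> carrier_vec d \<Longrightarrow> U \<theta> n t x = realize a (UU \<theta> n t) x $ 0"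
  using UU_level_ok unfolding level_ok_def by blast

lemma UU_param_count_le:
  assumes "\<theta> \<in> Theta" "t \<in> {0..T}"
  shows "real (ann_P (UU \<theta> n t)) \<le> 2 * real (max dd (ann_L G) + n * ann_H F)
    * real (max dd (max (maxnorm (ann_D F)) (maxnorm (ann_D G)))) ^ 2 * (3 * real M) ^ (2 * n)"
proof -
  have "ann_P (UU \<theta> n t) \<le> 2 * length (UU \<theta> n t) * maxnorm (ann_D (UU \<theta> n t)) ^ 2"
    using UU_is_ANN assms by (intro ann_P_le) blast
  also have "\<dots> \<le> 2 * depth_bound n * width_bound n ^ 2"
    using UU_level_ok[OF assms] unfolding level_ok_def by (intro mult_le_mono power_mono) auto
  finally have "real (ann_P (UU \<theta> n t)) \<le> real (2 * depth_bound n * width_bound n ^ 2)" by (simp only: of_nat_le_iff)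
  then show ?thesis
    by (simp add: depth_bound_def width_bound_def base_width_def power_mult_distrib power_mult[symmetric] mult_ac)
qed

end

theorem mainTheorem4:
  fixes d M \<dd> :: nat and T :: real and a :: "real \<Rightarrow> real"
    and \<J> F G :: ann
    and \<U> :: "int list \<Rightarrow> real \<Rightarrow> real"
    and W :: "int list \<Rightarrow> real \<Rightarrow> real vec"
    and U :: "int list \<Rightarrow> nat \<Rightarrow> real \<Rightarrow> real vec \<Rightarrow> real"
    and UU :: "int list \<Rightarrow> nat \<Rightarrow> real \<Rightarrow> ann"
  assumes d: "1 \<le> d" and M: "1 \<le> M" and dd: "1 \<le> \<dd>" and T: "0 < T"
    and a: "continuous_on UNIV a"
    and J: "is_ANN \<J>" "ann_D \<J> = [1, \<dd>, 1]" "\<forall>x \<in> carrier_vec 1. realize a \<J> x = x"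
    and F: "is_ANN F" "realization_in_C a F 1 1"
    and G: "is_ANN G" "realization_in_C a G d 1"
    and Ucal: "\<forall>\<theta> \<in> Theta. \<forall>t \<in> {0..T}. \<U> \<theta> t \<in> {0..T}"
    and Wdef: "\<forall>\<theta> \<in> Theta. \<forall>s \<in> {-T..T}. W \<theta> s \<in> carrier_vec d"
    and Urec: "\<forall>\<theta> \<in> Theta. \<forall>n. \<forall>t \<in> {0..T}. \<forall>x \<in> carrier_vec d.
        U \<theta> n t x =
          indN n / real M ^ n *
            (\<Sum>k = 1..M ^ n. realize a G (x + W (\<theta> @ [0, - int k]) (T - t)) $ 0)
          + (\<Sum>i<n. (T - t) / real M ^ (n - i) *
              (\<Sum>k = 1..M ^ (n - i).
                 realize a F (vec 1 (\<lambda>_. U (\<theta> @ [int i, int k]) i (\<U> (\<theta> @ [int i, int k]) t)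
                    (x + W (\<theta> @ [int i, int k]) (\<U> (\<theta> @ [int i, int k]) t - t)))) $ 0
                 - indN i *
                   realize a F (vec 1 (\<lambda>_. U (\<theta> @ [- int i, int k]) (max (i - 1) 0)
                    (\<U> (\<theta> @ [int i, int k]) t)
                    (x + W (\<theta> @ [int i, int k]) (\<U> (\<theta> @ [int i, int k]) t - t)))) $ 0))"
    and UUann: "\<forall>\<theta> \<in> Theta. \<forall>n. \<forall>t \<in> {0..T}. is_ANN (UU \<theta> n t)"
    and UU0: "\<forall>\<theta> \<in> Theta. \<forall>t \<in> {0..T}. UU \<theta> 0 t = ann_A (0\<^sub>m 1 d) (0\<^sub>v 1)"
    and UUrec: "\<forall>\<theta> \<in> Theta. \<forall>n \<ge> 1. \<forall>t \<in> {0..T}.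
        UU \<theta> n t = ann_boxplus \<J>
          [ ann_sum (map (\<lambda>k. ann_scalar (1 / real M ^ n)
                (ann_comp G (ann_A (1\<^sub>m d) (W (\<theta> @ [0, - int k]) (T - t)))))
              [1..<M ^ n + 1]),
            ann_boxplus \<J> (map (\<lambda>i. ann_scalar ((T - t) / real M ^ (n - i))
                (ann_boxplus \<J> (map (\<lambda>k.
                   ann_comp (ann_comp F (UU (\<theta> @ [int i, int k]) i (\<U> (\<theta> @ [int i, int k]) t)))
                     (ann_A (1\<^sub>m d) (W (\<theta> @ [int i, int k]) (\<U> (\<theta> @ [int i, int k]) t - t))))
                 [1..<M ^ (n - i) + 1])))
              [0..<n]),
            ann_boxplus \<J> (map (\<lambda>i. ann_scalar ((t - T) * indN i / real M ^ (n - i))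
                (ann_boxplus \<J> (map (\<lambda>k.
                   ann_comp (ann_comp F (UU (\<theta> @ [- int i, int k]) (max (i - 1) 0)
                               (\<U> (\<theta> @ [int i, int k]) t)))
                     (ann_A (1\<^sub>m d) (W (\<theta> @ [int i, int k]) (\<U> (\<theta> @ [int i, int k]) t - t))))
                 [1..<M ^ (n - i) + 1])))
              [0..<n]) ]"
  shows "\<forall>\<theta> \<in> Theta. \<forall>\<theta>1 \<in> Theta. \<forall>\<theta>2 \<in> Theta. \<forall>n. \<forall>t \<in> {0..T}. \<forall>t1 \<in> {0..T}. \<forall>t2 \<in> {0..T}.
     \<forall>x \<in> carrier_vec d.
       ann_D (UU \<theta>1 n t1) = ann_D (UU \<theta>2 n t2)
     \<and> realization_in_C a (UU \<theta> n t) d 1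
     \<and> ann_L (UU \<theta> n t) \<le> max \<dd> (ann_L G) + n * ann_H F
     \<and> real (maxnorm (ann_D (UU \<theta> n t)))
         \<le> real (max \<dd> (max (maxnorm (ann_D F)) (maxnorm (ann_D G)))) * (3 * real M) ^ n
     \<and> U \<theta> n t x = realize a (UU \<theta> n t) x $ 0
     \<and> real (ann_P (UU \<theta> n t))
         \<le> 2 * real (max \<dd> (ann_L G) + n * ann_H F)
           * real (max \<dd> (max (maxnorm (ann_D F)) (maxnorm (ann_D G)))) ^ 2 * (3 * real M) ^ (2 * n)"
proof (intro ballI allI conjI)
  interpret mlp_setting d M \<dd> T a \<J> F G \<U> W U UU
    by (rule mlp_setting.intro[OF assms(2,3,5-)])
  fix \<theta> \<theta>1 \<theta>2 n t t1 t2 and x :: "real vec"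
  assume \<theta>: "\<theta> \<in> Theta" "\<theta>1 \<in> Theta" "\<theta>2 \<in> Theta" and t: "t \<in> {0..T}" "t1 \<in> {0..T}" "t2 \<in> {0..T}"
    and x: "x \<in> carrier_vec d"
  show "ann_D (UU \<theta>1 n t1) = ann_D (UU \<theta>2 n t2)" by (rule UU_dims_eq[OF \<theta>(2,3) t(2,3)])
  show "realization_in_C a (UU \<theta> n t) d 1" by (rule UU_realization_in_C[OF \<theta>(1) t(1)])
  show "ann_L (UU \<theta> n t) \<le> max \<dd> (ann_L G) + n * ann_H F" by (rule UU_length_le[OF \<theta>(1) t(1)])
  show "real (maxnorm (ann_D (UU \<theta> n t)))
      \<le> real (max \<dd> (max (maxnorm (ann_D F)) (maxnorm (ann_D G)))) * (3 * real M) ^ n"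
    by (rule UU_maxnorm_le[OF \<theta>(1) t(1)])
  show "U \<theta> n t x = realize a (UU \<theta> n t) x $ 0" by (rule UU_realizes_U[OF \<theta>(1) t(1) x])
  show "real (ann_P (UU \<theta> n t)) \<le> 2 * real (max \<dd> (ann_L G) + n * ann_H F)
      * real (max \<dd> (max (maxnorm (ann_D F)) (maxnorm (ann_D G)))) ^ 2 * (3 * real M) ^ (2 * n)"
    by (rule UU_param_count_le[OF \<theta>(1) t(1)])
qed

end
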